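(* Let $G,H,K$ be pro-oligomorphic groups with $G$ split, and let $\Phi:\mathbf{S}(G)\to\mathbf{S}(K)$ and $\Psi:\mathbf{S}(H)\to\mathbf{S}(K)$ be exact functors. Suppose that $\Phi(X)\times\Psi(Y)$ is a transitive $K$-set whenever $X\in\mathbf{S}(G)$ and $Y\in\mathbf{S}(H)$ are transitive. Let $X$ be a transitive $G$-set, $Y$ a transitive $H$-set, and $Z$ a quotient of the $K$-set $\Phi(X)\times\Psi(Y)$. Then there exist a quotient $X'$ of $X$ and a quotient $Y'$ of $Y$ such that $Z\cong\Phi(X')\times\Psi(Y')$.
   Context: A pro-oligomorphic group is a Hausdorff topological group in which open subgroups form a neighborhood basis of the identity and $U\backslash G/V$ is finite for all open subgroups $U,V$. $\mathbf{S}(G)$ is the category of $G$-sets, i.e. sets with an action having open stabilizers and finitely many orbits, with $G$-equivariant maps; it has finite limits and colimits, computed on underlying sets. A functor between such categories is exact if it commutes with finite limits and finite colimits. $G$ is split if for every pro-oligomorphic $H$, every transitive $(G\times H)$-set is isomorphic to $X\times Y$ with $X$ a transitive $G$-set and $Y$ a transitive $H$-set. A quotient of a $K$-set $W$ is a $K$-set $Z$ together with a surjective $K$-map $W\to Z$. *)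

theory Defs
  imports "HOL-Analysis.Analysis" "HOL-Algebra.Group"
begin

definition topgroup :: "'g monoid \<Rightarrow> 'g topology \<Rightarrow> bool" where
  "topgroup G T \<longleftrightarrow> group G \<and> topspace T = carrier G \<and>
     continuous_map (prod_topology T T) T (\<lambda>(x, y). x \<otimes>\<^bsub>G\<^esub> y) \<and>
     continuous_map T T (\<lambda>x. inv\<^bsub>G\<^esub> x)"

definition open_subgroup :: "'g monoid \<Rightarrow> 'g topology \<Rightarrow> 'g set \<Rightarrow> bool" where
  "open_subgroup G T U \<longleftrightarrow> subgroup U G \<and> openin T U"

definition double_coset :: "'g monoid \<Rightarrow> 'g set \<Rightarrow> 'g \<Rightarrow> 'g set \<Rightarrow> 'g set" where
  "double_coset G U g V = {u \<otimes>\<^bsub>G\<^esub> g \<otimes>\<^bsub>G\<^esub> v | u v. u \<in> U \<and> v \<in> V}"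

definition pro_oligomorphic :: "'g monoid \<Rightarrow> 'g topology \<Rightarrow> bool" where
  "pro_oligomorphic G T \<longleftrightarrow> topgroup G T \<and> Hausdorff_space T \<and>
     (\<forall>W. openin T W \<and> \<one>\<^bsub>G\<^esub> \<in> W \<longrightarrow> (\<exists>U. open_subgroup G T U \<and> U \<subseteq> W)) \<and>
     (\<forall>U V. open_subgroup G T U \<and> open_subgroup G T V \<longrightarrow>
        finite {double_coset G U g V | g. g \<in> carrier G})"

type_synonym ('a, 'g) gset = "'a set \<times> ('g \<Rightarrow> 'a \<Rightarrow> 'a)"

definition orbit :: "'g monoid \<Rightarrow> ('a, 'g) gset \<Rightarrow> 'a \<Rightarrow> 'a set" where
  "orbit G X x = (\<lambda>g. snd X g x) ` carrier G"

definition is_gset :: "'g monoid \<Rightarrow> 'g topology \<Rightarrow> ('a, 'g) gset \<Rightarrow> bool" where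
  "is_gset G T X \<longleftrightarrow>
     (\<forall>g\<in>carrier G. \<forall>x\<in>fst X. snd X g x \<in> fst X) \<and>
     (\<forall>x\<in>fst X. snd X \<one>\<^bsub>G\<^esub> x = x) \<and>
     (\<forall>g\<in>carrier G. \<forall>h\<in>carrier G. \<forall>x\<in>fst X.
         snd X (g \<otimes>\<^bsub>G\<^esub> h) x = snd X g (snd X h x)) \<and>
     (\<forall>x\<in>fst X. openin T {g \<in> carrier G. snd X g x = x}) \<and>
     finite (orbit G X ` fst X)"

definition transitive_gset :: "'g monoid \<Rightarrow> ('a, 'g) gset \<Rightarrow> bool" where
  "transitive_gset G X \<longleftrightarrow> fst X \<noteq> {} \<and>
     (\<forall>x\<in>fst X. \<forall>y\<in>fst X. \<exists>g\<in>carrier G. snd X g x = y)"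

definition gmap :: "'g monoid \<Rightarrow> ('a, 'g) gset \<Rightarrow> ('b, 'g) gset \<Rightarrow> ('a \<Rightarrow> 'b) \<Rightarrow> bool" where
  "gmap G X Y f \<longleftrightarrow> (\<forall>x\<in>fst X. f x \<in> fst Y) \<and>
     (\<forall>g\<in>carrier G. \<forall>x\<in>fst X. f (snd X g x) = snd Y g (f x))"

definition gset_iso :: "'g monoid \<Rightarrow> ('a, 'g) gset \<Rightarrow> ('b, 'g) gset \<Rightarrow> bool" where
  "gset_iso G X Y \<longleftrightarrow> (\<exists>f. gmap G X Y f \<and> bij_betw f (fst X) (fst Y))"

definition gset_quotient :: "'g monoid \<Rightarrow> 'g topology \<Rightarrow> ('a, 'g) gset \<Rightarrow> ('b, 'g) gset \<Rightarrow> bool" where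
  "gset_quotient G T W Z \<longleftrightarrow> is_gset G T Z \<and> (\<exists>f. gmap G W Z f \<and> f ` fst W = fst Z)"

definition diag_prod :: "('a, 'g) gset \<Rightarrow> ('b, 'g) gset \<Rightarrow> ('a \<times> 'b, 'g) gset" where
  "diag_prod X Y = (fst X \<times> fst Y, \<lambda>g (x, y). (snd X g x, snd Y g y))"

definition ext_prod :: "('a, 'g) gset \<Rightarrow> ('b, 'h) gset \<Rightarrow> ('a \<times> 'b, 'g \<times> 'h) gset" where
  "ext_prod X Y = (fst X \<times> fst Y, \<lambda>(g, h) (x, y). (snd X g x, snd Y h y))"

section \<open>Finite limits and colimits in S(G) (computed on underlying sets)\<close>

definition is_terminal :: "('a, 'g) gset \<Rightarrow> bool" where
  "is_terminal X \<longleftrightarrow> card (fst X) = 1"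

definition is_initial :: "('a, 'g) gset \<Rightarrow> bool" where
  "is_initial X \<longleftrightarrow> fst X = {}"

definition is_product :: "'g monoid \<Rightarrow> ('a, 'g) gset \<Rightarrow> ('a, 'g) gset \<Rightarrow> ('a, 'g) gset
    \<Rightarrow> ('a \<Rightarrow> 'a) \<Rightarrow> ('a \<Rightarrow> 'a) \<Rightarrow> bool" where
  "is_product G A B P p1 p2 \<longleftrightarrow> gmap G P A p1 \<and> gmap G P B p2 \<and>
     bij_betw (\<lambda>z. (p1 z, p2 z)) (fst P) (fst A \<times> fst B)"

definition is_equalizer :: "'g monoid \<Rightarrow> ('a, 'g) gset \<Rightarrow> ('a, 'g) gset \<Rightarrow> ('a \<Rightarrow> 'a) \<Rightarrow> ('a \<Rightarrow> 'a)
    \<Rightarrow> ('a, 'g) gset \<Rightarrow> ('a \<Rightarrow> 'a) \<Rightarrow> bool" where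
  "is_equalizer G A B f g E e \<longleftrightarrow> gmap G E A e \<and> inj_on e (fst E) \<and>
     e ` fst E = {x \<in> fst A. f x = g x}"

definition is_coproduct :: "'g monoid \<Rightarrow> ('a, 'g) gset \<Rightarrow> ('a, 'g) gset \<Rightarrow> ('a, 'g) gset
    \<Rightarrow> ('a \<Rightarrow> 'a) \<Rightarrow> ('a \<Rightarrow> 'a) \<Rightarrow> bool" where
  "is_coproduct G A B C i1 i2 \<longleftrightarrow> gmap G A C i1 \<and> gmap G B C i2 \<and>
     inj_on i1 (fst A) \<and> inj_on i2 (fst B) \<and> i1 ` fst A \<inter> i2 ` fst B = {} \<and>
     i1 ` fst A \<union> i2 ` fst B = fst C"

definition is_coequalizer :: "'g monoid \<Rightarrow> ('a, 'g) gset \<Rightarrow> ('a, 'g) gset \<Rightarrow> ('a \<Rightarrow> 'a) \<Rightarrow> ('a \<Rightarrow> 'a)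
    \<Rightarrow> ('a, 'g) gset \<Rightarrow> ('a \<Rightarrow> 'a) \<Rightarrow> bool" where
  "is_coequalizer G A B f g Q q \<longleftrightarrow> gmap G B Q q \<and> q ` fst B = fst Q \<and>
     (\<forall>x\<in>fst B. \<forall>y\<in>fst B. q x = q y \<longleftrightarrow>
        (x, y) \<in> ({(f a, g a) | a. a \<in> fst A} \<union> {(g a, f a) | a. a \<in> fst A})\<^sup>*)"

text \<open>Objects of S(G) are G-sets whose underlying set lies in a fixed carrier type 'a
  (in the theorem: nat \<times> 'g set, which contains an isomorphic copy of every G-set).
  A functor is given by its object map Fo and its morphism map Fm X Y f; morphisms are
  identified when they agree on the underlying set of the source.\<close>

definition is_functor :: "'g monoid \<Rightarrow> 'g topology \<Rightarrow> 'k monoid \<Rightarrow> 'k topology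
    \<Rightarrow> (('a, 'g) gset \<Rightarrow> ('b, 'k) gset)
    \<Rightarrow> (('a, 'g) gset \<Rightarrow> ('a, 'g) gset \<Rightarrow> ('a \<Rightarrow> 'a) \<Rightarrow> ('b \<Rightarrow> 'b)) \<Rightarrow> bool" where
  "is_functor G TG K TK Fo Fm \<longleftrightarrow>
     (\<forall>X. is_gset G TG X \<longrightarrow> is_gset K TK (Fo X)) \<and>
     (\<forall>X Y f. is_gset G TG X \<and> is_gset G TG Y \<and> gmap G X Y f \<longrightarrow>
        gmap K (Fo X) (Fo Y) (Fm X Y f)) \<and>
     (\<forall>X Y f f'. is_gset G TG X \<and> is_gset G TG Y \<and> gmap G X Y f \<and> gmap G X Y f' \<and>
        (\<forall>x\<in>fst X. f x = f' x) \<longrightarrow> (\<forall>z\<in>fst (Fo X). Fm X Y f z = Fm X Y f' z)) \<and>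
     (\<forall>X. is_gset G TG X \<longrightarrow> (\<forall>z\<in>fst (Fo X). Fm X X id z = z)) \<and>
     (\<forall>X Y Z f g. is_gset G TG X \<and> is_gset G TG Y \<and> is_gset G TG Z \<and>
        gmap G X Y f \<and> gmap G Y Z g \<longrightarrow>
        (\<forall>z\<in>fst (Fo X). Fm X Z (g \<circ> f) z = Fm Y Z g (Fm X Y f z)))"

definition exact_functor :: "'g monoid \<Rightarrow> 'g topology \<Rightarrow> 'k monoid \<Rightarrow> 'k topology
    \<Rightarrow> (('a, 'g) gset \<Rightarrow> ('b, 'k) gset)
    \<Rightarrow> (('a, 'g) gset \<Rightarrow> ('a, 'g) gset \<Rightarrow> ('a \<Rightarrow> 'a) \<Rightarrow> ('b \<Rightarrow> 'b)) \<Rightarrow> bool" where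
  "exact_functor G TG K TK Fo Fm \<longleftrightarrow> is_functor G TG K TK Fo Fm \<and>
     \<comment> \<open>finite limits: terminal object, binary products, equalizers\<close>
     (\<forall>X. is_gset G TG X \<and> is_terminal X \<longrightarrow> is_terminal (Fo X)) \<and>
     (\<forall>A B P p1 p2. is_gset G TG A \<and> is_gset G TG B \<and> is_gset G TG P \<and>
        is_product G A B P p1 p2 \<longrightarrow>
        is_product K (Fo A) (Fo B) (Fo P) (Fm P A p1) (Fm P B p2)) \<and>
     (\<forall>A B f g E e. is_gset G TG A \<and> is_gset G TG B \<and> is_gset G TG E \<and>
        gmap G A B f \<and> gmap G A B g \<and> is_equalizer G A B f g E e \<longrightarrow>
        is_equalizer K (Fo A) (Fo B) (Fm A B f) (Fm A B g) (Fo E) (Fm E A e)) \<and>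
     \<comment> \<open>finite colimits: initial object, binary coproducts, coequalizers\<close>
     (\<forall>X. is_gset G TG X \<and> is_initial X \<longrightarrow> is_initial (Fo X)) \<and>
     (\<forall>A B C i1 i2. is_gset G TG A \<and> is_gset G TG B \<and> is_gset G TG C \<and>
        is_coproduct G A B C i1 i2 \<longrightarrow>
        is_coproduct K (Fo A) (Fo B) (Fo C) (Fm A C i1) (Fm B C i2)) \<and>
     (\<forall>A B f g Q q. is_gset G TG A \<and> is_gset G TG B \<and> is_gset G TG Q \<and>
        gmap G A B f \<and> gmap G A B g \<and> is_coequalizer G A B f g Q q \<longrightarrow>
        is_coequalizer K (Fo A) (Fo B) (Fm A B f) (Fm A B g) (Fo Q) (Fm B Q q))"

text \<open>G is split relative to the pro-oligomorphic groups whose carrier type is 'h.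
  G-sets, H-sets and (G\<times>H)-sets are taken with carriers in the universal carrier types
  nat \<times> 'g set etc., which contain a copy of every such set up to isomorphism.\<close>

definition split_wrt :: "'g monoid \<Rightarrow> 'g topology \<Rightarrow> 'h itself \<Rightarrow> bool" where
  "split_wrt G TG (_ :: 'h itself) \<longleftrightarrow>
     (\<forall>(H :: 'h monoid) TH. pro_oligomorphic H TH \<longrightarrow>
       (\<forall>W :: (nat \<times> ('g \<times> 'h) set, 'g \<times> 'h) gset.
          is_gset (G \<times>\<times> H) (prod_topology TG TH) W \<and> transitive_gset (G \<times>\<times> H) W \<longrightarrow>
          (\<exists>(X :: (nat \<times> 'g set, 'g) gset) (Y :: (nat \<times> 'h set, 'h) gset).
             is_gset G TG X \<and> transitive_gset G X \<and>
             is_gset H TH Y \<and> transitive_gset H Y \<and>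
             gset_iso (G \<times>\<times> H) W (ext_prod X Y))))"

end

theory Submission
  imports Defs
begin

text \<open>For a G-invariant relation \<open>S\<close> on \<open>X \<times> X\<close>, exactness of \<open>\<Phi>\<close> yields a relation
  \<open>\<Phi>(S)\<close> on \<open>\<Phi>(X)\<close>: these lifts are compatible with disjoint unions, kernels, the diagonal,
  converse and composition, and every pair of points of \<open>\<Phi>(X)\<close> lies in the lift of exactly
  one orbit of \<open>X \<times> X\<close>. Given \<open>q : \<Phi>(X) \<times> \<Psi>(Y) \<rightarrow> Z\<close>, relate \<open>(x, y)\<close> and \<open>(x', y')\<close>
  when \<open>q\<close> identifies points lying over the orbits of \<open>(x, x')\<close> and \<open>(y, y')\<close>; transitivity of
  \<open>\<Phi>(X') \<times> \<Psi>(Y')\<close> makes this independent of the chosen points and an invariant equivalence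
  relation on \<open>X \<times> Y\<close>. Splitness of \<open>G\<close> makes it a product of invariant equivalence relations
  \<open>R\<close> on \<open>X\<close> and \<open>S\<close> on \<open>Y\<close>, and then \<open>q\<close> has the same kernel as
  \<open>\<Phi>(X \<rightarrow> X/R) \<times> \<Psi>(Y \<rightarrow> Y/S)\<close>, so \<open>Z \<cong> \<Phi>(X/R) \<times> \<Psi>(Y/S)\<close>.\<close>

section \<open>Smooth actions and orbits\<close>

definition smooth_action :: "'g monoid \<Rightarrow> 'g topology \<Rightarrow> ('a, 'g) gset \<Rightarrow> bool" where
  "smooth_action G T X \<longleftrightarrow>
     (\<forall>g\<in>carrier G. \<forall>x\<in>fst X. snd X g x \<in> fst X) \<and>
     (\<forall>x\<in>fst X. snd X \<one>\<^bsub>G\<^esub> x = x) \<and>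
     (\<forall>g\<in>carrier G. \<forall>h\<in>carrier G. \<forall>x\<in>fst X.
         snd X (g \<otimes>\<^bsub>G\<^esub> h) x = snd X g (snd X h x)) \<and>
     (\<forall>x\<in>fst X. openin T {g \<in> carrier G. snd X g x = x})"

lemma is_gsetI: "smooth_action G T X \<Longrightarrow> finite (orbit G X ` fst X) \<Longrightarrow> is_gset G T X"
  unfolding is_gset_def smooth_action_def by blast

lemma is_gset_smooth: "is_gset G T X \<Longrightarrow> smooth_action G T X"
  unfolding is_gset_def smooth_action_def by blast

lemma is_gset_finite_orbits: "is_gset G T X \<Longrightarrow> finite (orbit G X ` fst X)"
  unfolding is_gset_def by blast

lemma smooth_action_closed:
  "smooth_action G T X \<Longrightarrow> g \<in> carrier G \<Longrightarrow> x \<in> fst X \<Longrightarrow> snd X g x \<in> fst X"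
  unfolding smooth_action_def by blast

lemma smooth_action_one: "smooth_action G T X \<Longrightarrow> x \<in> fst X \<Longrightarrow> snd X \<one>\<^bsub>G\<^esub> x = x"
  unfolding smooth_action_def by blast

lemma smooth_action_mult:
  "smooth_action G T X \<Longrightarrow> g \<in> carrier G \<Longrightarrow> h \<in> carrier G \<Longrightarrow> x \<in> fst X \<Longrightarrow>
   snd X (g \<otimes>\<^bsub>G\<^esub> h) x = snd X g (snd X h x)"
  unfolding smooth_action_def by blast

lemma smooth_action_stabilizer_open:
  "smooth_action G T X \<Longrightarrow> x \<in> fst X \<Longrightarrow> openin T {g \<in> carrier G. snd X g x = x}"
  unfolding smooth_action_def by blast

lemma smooth_action_inv_left:
  assumes "group G" "smooth_action G T X" "g \<in> carrier G" "x \<in> fst X"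
  shows "snd X (inv\<^bsub>G\<^esub> g) (snd X g x) = x"
proof -
  have "snd X (inv\<^bsub>G\<^esub> g) (snd X g x) = snd X (inv\<^bsub>G\<^esub> g \<otimes>\<^bsub>G\<^esub> g) x"
    using assms by (simp add: smooth_action_mult group.inv_closed)
  also have "\<dots> = x" using assms by (simp add: group.l_inv smooth_action_one)
  finally show ?thesis .
qed

lemma smooth_action_inv_right:
  assumes "group G" "smooth_action G T X" "g \<in> carrier G" "x \<in> fst X"
  shows "snd X g (snd X (inv\<^bsub>G\<^esub> g) x) = x"
  using smooth_action_inv_left[OF assms(1,2) group.inv_closed[OF assms(1,3)] assms(4)] assms
  by (simp add: group.inv_inv)

lemma transitive_gsetE:
  assumes "transitive_gset G X" "x \<in> fst X" "y \<in> fst X"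
  obtains g where "g \<in> carrier G" "snd X g x = y"
  using assms unfolding transitive_gset_def by blast

lemma orbit_memI: "g \<in> carrier G \<Longrightarrow> snd X g x \<in> orbit G X x"
  unfolding orbit_def by blast

lemma orbitE:
  assumes "y \<in> orbit G A x"
  obtains g where "g \<in> carrier G" "y = snd A g x"
  using assms unfolding orbit_def by blast

lemma orbit_self:
  assumes "group G" "smooth_action G T X" "x \<in> fst X"
  shows "x \<in> orbit G X x"
proof -
  have "\<one>\<^bsub>G\<^esub> \<in> carrier G" using assms(1) by (simp add: group.is_monoid monoid.one_closed)
  then have "snd X \<one>\<^bsub>G\<^esub> x \<in> orbit G X x" by (rule orbit_memI)
  then show ?thesis using smooth_action_one[OF assms(2,3)] by simp
qed

lemma orbit_subset: "smooth_action G T X \<Longrightarrow> x \<in> fst X \<Longrightarrow> orbit G X x \<subseteq> fst X"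
  unfolding orbit_def using smooth_action_closed by fastforce

lemma orbit_act_eq:
  assumes "group G" "smooth_action G T X" "g \<in> carrier G" "x \<in> fst X"
  shows "orbit G X (snd X g x) = orbit G X x"
proof
  show "orbit G X (snd X g x) \<subseteq> orbit G X x"
  proof
    fix y assume "y \<in> orbit G X (snd X g x)"
    then obtain h where h: "h \<in> carrier G" "y = snd X h (snd X g x)" by (rule orbitE)
    then have "y = snd X (h \<otimes>\<^bsub>G\<^esub> g) x" using smooth_action_mult[OF assms(2) h(1) assms(3,4)] by simp
    then show "y \<in> orbit G X x" using assms(1,3) h(1) orbit_memI[of "h \<otimes>\<^bsub>G\<^esub> g" G X x]
      by (simp add: group.is_monoid monoid.m_closed)
  qed
next
  show "orbit G X x \<subseteq> orbit G X (snd X g x)"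
  proof
    fix y assume "y \<in> orbit G X x"
    then obtain h where h: "h \<in> carrier G" "y = snd X h x" by (rule orbitE)
    have ig: "inv\<^bsub>G\<^esub> g \<in> carrier G" using assms(1,3) by (simp add: group.inv_closed)
    have "snd X (h \<otimes>\<^bsub>G\<^esub> inv\<^bsub>G\<^esub> g) (snd X g x) = snd X h (snd X (inv\<^bsub>G\<^esub> g) (snd X g x))"
      using smooth_action_mult[OF assms(2) h(1) ig smooth_action_closed[OF assms(2,3,4)]] .
    also have "\<dots> = y" using smooth_action_inv_left[OF assms] h(2) by simp
    finally show "y \<in> orbit G X (snd X g x)"
      using assms(1) ig h(1) orbit_memI[of "h \<otimes>\<^bsub>G\<^esub> inv\<^bsub>G\<^esub> g" G X "snd X g x"]
      by (simp add: group.is_monoid monoid.m_closed)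
  qed
qed

lemma orbit_eq_of_mem:
  assumes "group G" "smooth_action G T X" "x \<in> fst X" "y \<in> orbit G X x"
  shows "orbit G X y = orbit G X x"
  using assms(4) by (rule orbitE) (simp add: orbit_act_eq[OF assms(1,2) _ assms(3)])

lemma is_gset_if_transitive:
  assumes "group G" "smooth_action G T X" "transitive_gset G X"
  shows "is_gset G T X"
proof -
  obtain x0 where x0: "x0 \<in> fst X" using assms(3) unfolding transitive_gset_def by blast
  have "orbit G X ` fst X \<subseteq> {orbit G X x0}"
  proof
    fix Ob assume "Ob \<in> orbit G X ` fst X"
    then obtain x where x: "x \<in> fst X" "Ob = orbit G X x" by blast
    obtain g where "g \<in> carrier G" "snd X g x0 = x" using transitive_gsetE[OF assms(3) x0 x(1)] .
    then have "orbit G X x = orbit G X x0" using orbit_act_eq[OF assms(1,2) _ x0] by blast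
    then show "Ob \<in> {orbit G X x0}" using x(2) by simp
  qed
  then have "finite (orbit G X ` fst X)" by (rule finite_subset) simp
  then show ?thesis by (rule is_gsetI[OF assms(2)])
qed

lemma gmap_comp: "gmap G A B f \<Longrightarrow> gmap G B C g \<Longrightarrow> gmap G A C (g \<circ> f)"
  unfolding gmap_def by auto

lemma gmap_onto_transitive:
  assumes "gmap G A B f" "fst A \<noteq> {}" "smooth_action G T A" "transitive_gset G B"
  shows "f ` fst A = fst B"
proof
  show "f ` fst A \<subseteq> fst B" using assms(1) unfolding gmap_def by blast
  obtain a where a: "a \<in> fst A" using assms(2) by blast
  show "fst B \<subseteq> f ` fst A"
  proof
    fix b assume b: "b \<in> fst B"
    have "f a \<in> fst B" using assms(1) a unfolding gmap_def by blast
    then obtain g where g: "g \<in> carrier G" "snd B g (f a) = b"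
      using transitive_gsetE[OF assms(4) _ b] by blast
    then have "f (snd A g a) = b" using assms(1) a unfolding gmap_def by simp
    then show "b \<in> f ` fst A" using smooth_action_closed[OF assms(3) g(1) a] by blast
  qed
qed

lemma gset_iso_of_kernel_eq:
  assumes q: "gmap G W Z q" "q ` fst W = fst Z"
    and f: "gmap G W T f" "f ` fst W = fst T"
    and W: "smooth_action G S W"
    and ker: "\<And>w w'. w \<in> fst W \<Longrightarrow> w' \<in> fst W \<Longrightarrow> q w = q w' \<longleftrightarrow> f w = f w'"
  shows "gset_iso G Z T"
proof -
  define s where "s = inv_into (fst W) q"
  have s: "s z \<in> fst W" "q (s z) = z" if "z \<in> fst Z" for z
    using that q(2) unfolding s_def by (auto intro: inv_into_into f_inv_into_f)
  have fs: "f (s (q w)) = f w" if w: "w \<in> fst W" for w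
  proof -
    have qw: "q w \<in> fst Z" using w q(2) by blast
    show ?thesis using ker[OF s(1)[OF qw] w] s(2)[OF qw] by simp
  qed
  have "gmap G Z T (f \<circ> s)"
    unfolding gmap_def
  proof (intro conjI ballI)
    fix z assume "z \<in> fst Z"
    then show "(f \<circ> s) z \<in> fst T" using s(1) f(1) unfolding gmap_def by simp
  next
    fix g z assume g: "g \<in> carrier G" and z: "z \<in> fst Z"
    have "snd Z g z = q (snd W g (s z))" using q(1) g s[OF z] unfolding gmap_def by simp
    then have "f (s (snd Z g z)) = f (snd W g (s z))"
      using fs[OF smooth_action_closed[OF W g s(1)[OF z]]] by simp
    also have "\<dots> = snd T g (f (s z))" using f(1) g s(1)[OF z] unfolding gmap_def by simp
    finally show "(f \<circ> s) (snd Z g z) = snd T g ((f \<circ> s) z)" by simp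
  qed
  moreover have "bij_betw (f \<circ> s) (fst Z) (fst T)"
  proof (rule bij_betw_imageI)
    show "inj_on (f \<circ> s) (fst Z)"
      by (rule inj_onI) (metis comp_apply ker s)
    have "(f \<circ> s) ` fst Z = (\<lambda>w. f (s (q w))) ` fst W" unfolding q(2)[symmetric] by (simp add: image_image)
    also have "\<dots> = f ` fst W" using fs by (rule image_cong[OF refl])
    finally show "(f \<circ> s) ` fst Z = fst T" using f(2) by simp
  qed
  ultimately show ?thesis unfolding gset_iso_def by blast
qed

section \<open>Standard copies of G-sets\<close>

definition transport :: "('x \<Rightarrow> 'y) \<Rightarrow> ('x, 'g) gset \<Rightarrow> ('y, 'g) gset" where
  "transport e A = (e ` fst A, \<lambda>g z. e (snd A g (inv_into (fst A) e z)))"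

lemma transport_fst[simp]: "fst (transport e A) = e ` fst A" by (simp add: transport_def)
lemma transport_act: "inj_on e (fst A) \<Longrightarrow> a \<in> fst A \<Longrightarrow> snd (transport e A) g (e a) = e (snd A g a)"
  by (simp add: transport_def)

lemma smooth_action_transport:
  assumes inj: "inj_on e (fst A)" and smooth: "smooth_action G T A"
  shows "smooth_action G T (transport e A)"
  unfolding smooth_action_def
proof (intro conjI ballI)
  fix g z assume g: "g \<in> carrier G" and z: "z \<in> fst (transport e A)"
  then obtain a where a: "a \<in> fst A" "z = e a" by auto
  show "snd (transport e A) g z \<in> fst (transport e A)"
    using a g transport_act[OF inj a(1)] smooth_action_closed[OF smooth g a(1)] by simp
next
  fix z assume z: "z \<in> fst (transport e A)"
  then obtain a where a: "a \<in> fst A" "z = e a" by auto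
  show "snd (transport e A) \<one>\<^bsub>G\<^esub> z = z"
    using a transport_act[OF inj a(1)] smooth_action_one[OF smooth a(1)] by simp
next
  fix g h z assume g: "g \<in> carrier G" and h: "h \<in> carrier G" and z: "z \<in> fst (transport e A)"
  then obtain a where a: "a \<in> fst A" "z = e a" by auto
  have ha: "snd A h a \<in> fst A" by (rule smooth_action_closed[OF smooth h a(1)])
  have "snd (transport e A) (g \<otimes>\<^bsub>G\<^esub> h) z = e (snd A (g \<otimes>\<^bsub>G\<^esub> h) a)"
    using a transport_act[OF inj a(1)] by simp
  also have "\<dots> = e (snd A g (snd A h a))" using smooth_action_mult[OF smooth g h a(1)] by simp
  also have "\<dots> = snd (transport e A) g (snd (transport e A) h z)"
    using a transport_act[OF inj a(1), of h] transport_act[OF inj ha, of g] by simp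
  finally show "snd (transport e A) (g \<otimes>\<^bsub>G\<^esub> h) z = snd (transport e A) g (snd (transport e A) h z)" .
next
  fix z assume z: "z \<in> fst (transport e A)"
  then obtain a where a: "a \<in> fst A" "z = e a" by auto
  have "{g \<in> carrier G. snd (transport e A) g z = z} = {g \<in> carrier G. snd A g a = a}"
  proof (intro Collect_cong conj_cong refl)
    fix g assume g: "g \<in> carrier G"
    have "snd (transport e A) g z = e (snd A g a)" using a transport_act[OF inj a(1)] by simp
    then show "(snd (transport e A) g z = z) = (snd A g a = a)"
      using a inj smooth_action_closed[OF smooth g a(1)] by (auto dest: inj_onD)
  qed
  then show "openin T {g \<in> carrier G. snd (transport e A) g z = z}" using smooth_action_stabilizer_open[OF smooth a(1)] by simp
qed

lemma transport_orbit:
  assumes "inj_on e (fst A)" "a \<in> fst A"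
  shows "orbit G (transport e A) (e a) = e ` orbit G A a"
  using assms unfolding orbit_def by (auto simp: transport_act)

lemma is_gset_transport:
  assumes "inj_on e (fst A)" "is_gset G T A"
  shows "is_gset G T (transport e A)"
proof -
  have "orbit G (transport e A) ` fst (transport e A) = (\<lambda>a. orbit G (transport e A) (e a)) ` fst A"
    by (simp add: image_image)
  also have "\<dots> = (\<lambda>a. e ` orbit G A a) ` fst A"
    using transport_orbit[OF assms(1)] by (intro image_cong) auto
  also have "\<dots> = (\<lambda>Ob. e ` Ob) ` (orbit G A ` fst A)" by (simp add: image_image)
  finally have "finite (orbit G (transport e A) ` fst (transport e A))"
    using is_gset_finite_orbits[OF assms(2)] by simp
  then show ?thesis using smooth_action_transport[OF assms(1) is_gset_smooth[OF assms(2)]] by (rule is_gsetI[rotated])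
qed

lemma gmap_transport: "inj_on e (fst A) \<Longrightarrow> gmap G A (transport e A) e"
  unfolding gmap_def by (auto simp: transport_act)

lemma gmap_transport_inv:
  assumes inj: "inj_on e (fst A)" and smooth: "smooth_action G T A"
  shows "gmap G (transport e A) A (inv_into (fst A) e)"
  unfolding gmap_def
proof (intro conjI ballI)
  fix z assume "z \<in> fst (transport e A)"
  then show "inv_into (fst A) e z \<in> fst A" by (auto intro: inv_into_into)
next
  fix g z assume g: "g \<in> carrier G" and z: "z \<in> fst (transport e A)"
  then obtain a where a: "a \<in> fst A" "z = e a" by auto
  have "snd (transport e A) g z = e (snd A g a)" using a transport_act[OF inj a(1)] by simp
  then show "inv_into (fst A) e (snd (transport e A) g z) = snd A g (inv_into (fst A) e z)"
    using a inj smooth_action_closed[OF smooth g a(1)] by simp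
qed

lemma transitive_transport:
  assumes inj: "inj_on e (fst A)" and tr: "transitive_gset G A"
  shows "transitive_gset G (transport e A)"
  unfolding transitive_gset_def
proof (intro conjI ballI)
  show "fst (transport e A) \<noteq> {}" using tr unfolding transitive_gset_def by simp
next
  fix z w assume "z \<in> fst (transport e A)" "w \<in> fst (transport e A)"
  then obtain a b where ab: "a \<in> fst A" "b \<in> fst A" "z = e a" "w = e b" by auto
  obtain g where "g \<in> carrier G" "snd A g a = b" using transitive_gsetE[OF tr ab(1,2)] .
  then show "\<exists>g\<in>carrier G. snd (transport e A) g z = w" using ab inj by (auto simp: transport_act)
qed

text \<open>An element is coded by the index of its orbit together with the set of group elements
  moving a chosen representative of that orbit to it. The code is injective on a G-set, so every
  G-set has an isomorphic copy inside \<open>nat \<times> 'g set\<close>, the carrier type of the categories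
  of G-sets in the statement.\<close>

definition orbit_rep :: "'g monoid \<Rightarrow> ('x, 'g) gset \<Rightarrow> 'x \<Rightarrow> 'x" where
  "orbit_rep G A a = (SOME b. b \<in> fst A \<and> orbit G A b = orbit G A a)"

definition std_code :: "'g monoid \<Rightarrow> ('x, 'g) gset \<Rightarrow> 'x \<Rightarrow> nat \<times> 'g set" where
  "std_code G A a = (to_nat_on (orbit G A ` fst A) (orbit G A a), {g \<in> carrier G. snd A g (orbit_rep G A a) = a})"

lemma inj_on_std_code:
  assumes "group G" "is_gset G T A"
  shows "inj_on (std_code G A) (fst A)"
proof (rule inj_onI)
  fix a b assume a: "a \<in> fst A" and b: "b \<in> fst A" and eq: "std_code G A a = std_code G A b"
  have smooth: "smooth_action G T A" and fin: "finite (orbit G A ` fst A)" using is_gset_smooth[OF assms(2)] is_gset_finite_orbits[OF assms(2)] by auto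
  have "inj_on (to_nat_on (orbit G A ` fst A)) (orbit G A ` fst A)"
    using fin by (intro inj_on_to_nat_on countable_finite)
  moreover have "to_nat_on (orbit G A ` fst A) (orbit G A a) = to_nat_on (orbit G A ` fst A) (orbit G A b)"
    using eq unfolding std_code_def by simp
  ultimately have oeq: "orbit G A a = orbit G A b" using a b by (meson image_eqI inj_onD)
  then have req: "orbit_rep G A a = orbit_rep G A b" unfolding orbit_rep_def by simp
  have ex: "\<exists>c. c \<in> fst A \<and> orbit G A c = orbit G A a" using a by blast
  have "orbit_rep G A a \<in> fst A \<and> orbit G A (orbit_rep G A a) = orbit G A a"
    unfolding orbit_rep_def by (rule someI_ex[OF ex])
  then have "a \<in> orbit G A (orbit_rep G A a)" using orbit_self[OF assms(1) smooth a] by simp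
  then obtain g where g: "g \<in> carrier G" "a = snd A g (orbit_rep G A a)" by (rule orbitE)
  have "g \<in> {g \<in> carrier G. snd A g (orbit_rep G A a) = a}" using g by simp
  also have "\<dots> = {g \<in> carrier G. snd A g (orbit_rep G A b) = b}"
    using eq unfolding std_code_def by simp
  finally have "snd A g (orbit_rep G A b) = b" by simp
  then show "a = b" using g req by simp
qed

definition std_copy :: "'g monoid \<Rightarrow> ('x, 'g) gset \<Rightarrow> (nat \<times> 'g set, 'g) gset" where
  "std_copy G A = transport (std_code G A) A"

definition std_decode :: "'g monoid \<Rightarrow> ('x, 'g) gset \<Rightarrow> nat \<times> 'g set \<Rightarrow> 'x" where
  "std_decode G A = inv_into (fst A) (std_code G A)"

lemma std_copy_fst: "fst (std_copy G A) = std_code G A ` fst A"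
  by (simp add: std_copy_def)

context
  fixes G :: "'g monoid" and T :: "'g topology" and A :: "('x, 'g) gset"
  assumes grp: "group G" and A: "is_gset G T A"
begin

lemma is_gset_std_copy: "is_gset G T (std_copy G A)"
  unfolding std_copy_def using is_gset_transport[OF inj_on_std_code[OF grp A] A] .

lemma transitive_std_copy: "transitive_gset G A \<Longrightarrow> transitive_gset G (std_copy G A)"
  unfolding std_copy_def using transitive_transport[OF inj_on_std_code[OF grp A]] .

lemma gmap_std_code: "gmap G A (std_copy G A) (std_code G A)"
  unfolding std_copy_def using gmap_transport[OF inj_on_std_code[OF grp A]] .

lemma gmap_std_decode: "gmap G (std_copy G A) A (std_decode G A)"
  unfolding std_copy_def std_decode_def
  using gmap_transport_inv[OF inj_on_std_code[OF grp A] is_gset_smooth[OF A]] .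

lemma std_decode_code: "a \<in> fst A \<Longrightarrow> std_decode G A (std_code G A a) = a"
  unfolding std_decode_def using inj_on_std_code[OF grp A] by (simp add: inv_into_f_f)

lemma bij_betw_std_decode: "bij_betw (std_decode G A) (fst (std_copy G A)) (fst A)"
  unfolding std_decode_def std_copy_fst by (rule bij_betw_inv_into) (simp add: bij_betw_def inj_on_std_code[OF grp A])

lemma std_code_eq_iff:
  "a \<in> fst A \<Longrightarrow> b \<in> fst A \<Longrightarrow> std_code G A a = std_code G A b \<longleftrightarrow> a = b"
  using inj_on_std_code[OF grp A] by (auto dest: inj_onD)

end

section \<open>Orbits and products\<close>

lemma smooth_action_restrict:
  assumes smooth: "smooth_action G T A" and sub: "B \<subseteq> fst A" and inv: "\<forall>g\<in>carrier G. \<forall>x\<in>B. snd A g x \<in> B"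
  shows "smooth_action G T (B, snd A)"
  unfolding smooth_action_def fst_conv snd_conv
proof (intro conjI ballI)
  fix g x assume "g \<in> carrier G" "x \<in> B" then show "snd A g x \<in> B" using inv by blast
next
  fix x assume "x \<in> B" then show "snd A \<one>\<^bsub>G\<^esub> x = x" using sub smooth_action_one[OF smooth] by blast
next
  fix g h x assume "g \<in> carrier G" "h \<in> carrier G" "x \<in> B"
  then show "snd A (g \<otimes>\<^bsub>G\<^esub> h) x = snd A g (snd A h x)" using sub smooth_action_mult[OF smooth] by blast
next
  fix x assume "x \<in> B" then show "openin T {g \<in> carrier G. snd A g x = x}" using sub smooth_action_stabilizer_open[OF smooth] by blast
qed

lemma orbit_restrict: "orbit G (B, snd A) x = orbit G A x"
  unfolding orbit_def by simp

lemma is_gset_restrict: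
  assumes "is_gset G T A" "B \<subseteq> fst A" "\<forall>g\<in>carrier G. \<forall>x\<in>B. snd A g x \<in> B"
  shows "is_gset G T (B, snd A)"
proof (rule is_gsetI)
  show "smooth_action G T (B, snd A)" using smooth_action_restrict[OF is_gset_smooth[OF assms(1)] assms(2,3)] .
  have "orbit G (B, snd A) ` fst (B, snd A) \<subseteq> orbit G A ` fst A"
    using assms(2) by (auto simp: orbit_restrict)
  then show "finite (orbit G (B, snd A) ` fst (B, snd A))"
    using is_gset_finite_orbits[OF assms(1)] by (rule finite_subset)
qed

lemma gmap_restrict: "gmap G A Y f \<Longrightarrow> B \<subseteq> fst A \<Longrightarrow> gmap G (B, snd A) Y f"
  unfolding gmap_def by auto

lemma is_gset_orbit:
  assumes grp: "group G" and smooth: "smooth_action G T A" and a: "a \<in> fst A"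
  shows "is_gset G T (orbit G A a, snd A)" and "transitive_gset G (orbit G A a, snd A)"
proof -
  have sub: "orbit G A a \<subseteq> fst A" by (rule orbit_subset[OF smooth a])
  have inv: "\<forall>g\<in>carrier G. \<forall>x\<in>orbit G A a. snd A g x \<in> orbit G A a"
  proof (intro ballI)
    fix g x assume "g \<in> carrier G" "x \<in> orbit G A a"
    then show "snd A g x \<in> orbit G A a" using orbit_memI[of g G A x] orbit_eq_of_mem[OF grp smooth a] by simp
  qed
  have tr: "transitive_gset G (orbit G A a, snd A)"
    unfolding transitive_gset_def fst_conv snd_conv
  proof (intro conjI ballI)
    show "orbit G A a \<noteq> {}" using orbit_self[OF grp smooth a] by blast
  next
    fix x y assume x: "x \<in> orbit G A a" and y: "y \<in> orbit G A a"
    have "y \<in> orbit G A x" using orbit_eq_of_mem[OF grp smooth a x] y by simp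
    then show "\<exists>g\<in>carrier G. snd A g x = y" by (auto elim: orbitE)
  qed
  show "transitive_gset G (orbit G A a, snd A)" by (rule tr)
  show "is_gset G T (orbit G A a, snd A)"
    by (rule is_gset_if_transitive[OF grp smooth_action_restrict[OF smooth sub inv] tr])
qed

lemma diag_prod_act: "snd (diag_prod X Y) g (x, y) = (snd X g x, snd Y g y)"
  by (simp add: diag_prod_def)
lemma diag_prod_fst: "fst (diag_prod X Y) = fst X \<times> fst Y"
  by (simp add: diag_prod_def)

lemma gmap_diag_prod_fst: "gmap G (diag_prod X Y) X fst"
  unfolding gmap_def diag_prod_def by auto

lemma gmap_diag_prod_snd: "gmap G (diag_prod X Y) Y snd"
  unfolding gmap_def diag_prod_def by auto

lemma gmap_diag_prod_map:
  "gmap G X X' f \<Longrightarrow> gmap G Y Y' g \<Longrightarrow> gmap G (diag_prod X Y) (diag_prod X' Y') (map_prod f g)"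
  unfolding gmap_def diag_prod_def by auto

lemma smooth_action_diag_prod:
  assumes px: "smooth_action G T X" and py: "smooth_action G T Y"
  shows "smooth_action G T (diag_prod X Y)"
  unfolding smooth_action_def diag_prod_fst
proof (intro conjI ballI)
  fix g p assume g: "g \<in> carrier G" and p: "p \<in> fst X \<times> fst Y"
  then show "snd (diag_prod X Y) g p \<in> fst X \<times> fst Y"
    using smooth_action_closed[OF px g] smooth_action_closed[OF py g] by (auto simp: diag_prod_act)
next
  fix p assume p: "p \<in> fst X \<times> fst Y"
  then show "snd (diag_prod X Y) \<one>\<^bsub>G\<^esub> p = p"
    using smooth_action_one[OF px] smooth_action_one[OF py] by (auto simp: diag_prod_act)
next
  fix g h p assume g: "g \<in> carrier G" and h: "h \<in> carrier G" and p: "p \<in> fst X \<times> fst Y"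
  then show "snd (diag_prod X Y) (g \<otimes>\<^bsub>G\<^esub> h) p = snd (diag_prod X Y) g (snd (diag_prod X Y) h p)"
    using smooth_action_mult[OF px g h] smooth_action_mult[OF py g h] by (auto simp: diag_prod_act)
next
  fix p assume p: "p \<in> fst X \<times> fst Y"
  then obtain x y where xy: "p = (x, y)" "x \<in> fst X" "y \<in> fst Y" by auto
  have "{g \<in> carrier G. snd (diag_prod X Y) g p = p} =
        {g \<in> carrier G. snd X g x = x} \<inter> {g \<in> carrier G. snd Y g y = y}"
    using xy by (auto simp: diag_prod_act)
  then show "openin T {g \<in> carrier G. snd (diag_prod X Y) g p = p}"
    using smooth_action_stabilizer_open[OF px xy(2)] smooth_action_stabilizer_open[OF py xy(3)] by (simp add: openin_Int)
qed

lemma ext_prod_act: "snd (ext_prod X Y) (g, h) (x, y) = (snd X g x, snd Y h y)"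
  by (simp add: ext_prod_def)
lemma ext_prod_fst: "fst (ext_prod X Y) = fst X \<times> fst Y"
  by (simp add: ext_prod_def)

lemma ext_prod_stabilizer:
  assumes "x \<in> fst X" "y \<in> fst Y"
  shows "{k \<in> carrier (G \<times>\<times> H). snd (ext_prod X Y) k (x, y) = (x, y)} =
         {g \<in> carrier G. snd X g x = x} \<times> {h \<in> carrier H. snd Y h y = y}"
  by (auto simp: ext_prod_act)

lemma smooth_action_ext_prod:
  assumes px: "smooth_action G TG X" and py: "smooth_action H TH Y"
  shows "smooth_action (G \<times>\<times> H) (prod_topology TG TH) (ext_prod X Y)"
  unfolding smooth_action_def ext_prod_fst
proof (intro conjI ballI)
  fix k p assume k: "k \<in> carrier (G \<times>\<times> H)" and p: "p \<in> fst X \<times> fst Y"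
  then show "snd (ext_prod X Y) k p \<in> fst X \<times> fst Y"
    using smooth_action_closed[OF px] smooth_action_closed[OF py] by (auto simp: ext_prod_act)
next
  fix p assume p: "p \<in> fst X \<times> fst Y"
  then show "snd (ext_prod X Y) \<one>\<^bsub>G \<times>\<times> H\<^esub> p = p"
    using smooth_action_one[OF px] smooth_action_one[OF py] by (auto simp: ext_prod_act)
next
  fix k l p assume k: "k \<in> carrier (G \<times>\<times> H)" and l: "l \<in> carrier (G \<times>\<times> H)" and p: "p \<in> fst X \<times> fst Y"
  then show "snd (ext_prod X Y) (k \<otimes>\<^bsub>G \<times>\<times> H\<^esub> l) p = snd (ext_prod X Y) k (snd (ext_prod X Y) l p)"
    using smooth_action_mult[OF px] smooth_action_mult[OF py] smooth_action_closed[OF px] smooth_action_closed[OF py] by (auto simp: ext_prod_act)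
next
  fix p assume p: "p \<in> fst X \<times> fst Y"
  then obtain x y where xy: "p = (x, y)" "x \<in> fst X" "y \<in> fst Y" by auto
  then show "openin (prod_topology TG TH) {k \<in> carrier (G \<times>\<times> H). snd (ext_prod X Y) k p = p}"
    using smooth_action_stabilizer_open[OF px xy(2)] smooth_action_stabilizer_open[OF py xy(3)] ext_prod_stabilizer[OF xy(2,3), of G H]
    by (simp add: openin_prod_Times_iff)
qed

lemma transitive_ext_prod:
  assumes "transitive_gset G X" "transitive_gset H Y"
  shows "transitive_gset (G \<times>\<times> H) (ext_prod X Y)"
  unfolding transitive_gset_def ext_prod_fst
proof (intro conjI ballI)
  show "fst X \<times> fst Y \<noteq> {}" using assms unfolding transitive_gset_def by simp
next
  fix p p' assume "p \<in> fst X \<times> fst Y" "p' \<in> fst X \<times> fst Y"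
  then obtain x y x' y' where p: "p = (x, y)" "p' = (x', y')" "x \<in> fst X" "y \<in> fst Y" "x' \<in> fst X" "y' \<in> fst Y"
    by auto
  obtain g where g: "g \<in> carrier G" "snd X g x = x'" using transitive_gsetE[OF assms(1) p(3,5)] .
  obtain h where h: "h \<in> carrier H" "snd Y h y = y'" using transitive_gsetE[OF assms(2) p(4,6)] .
  have "snd (ext_prod X Y) (g, h) p = p'" using p g h by (simp add: ext_prod_act)
  then show "\<exists>k\<in>carrier (G \<times>\<times> H). snd (ext_prod X Y) k p = p'" using g h by force
qed

section \<open>Quotients by invariant equivalence relations\<close>

lemma topgroup_group: "topgroup G T \<Longrightarrow> group G"
  unfolding topgroup_def by blast

lemma topgroup_open_translate:
  assumes tg: "topgroup G T" and U: "openin T U" and g: "g \<in> carrier G"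
  shows "openin T ((\<lambda>u. g \<otimes>\<^bsub>G\<^esub> u) ` U)"
proof -
  have grp: "group G" using tg topgroup_group by blast
  have top: "topspace T = carrier G" using tg unfolding topgroup_def by blast
  have mc: "continuous_map (prod_topology T T) T (\<lambda>(x, y). x \<otimes>\<^bsub>G\<^esub> y)" using tg unfolding topgroup_def by blast
  have ig: "inv\<^bsub>G\<^esub> g \<in> carrier G" using grp g by (simp add: group.inv_closed)
  have pc: "continuous_map T (prod_topology T T) (\<lambda>y. (inv\<^bsub>G\<^esub> g, y))"
    by (rule continuous_map_pairedI) (simp_all add: top ig)
  have "continuous_map T T ((\<lambda>(x, y). x \<otimes>\<^bsub>G\<^esub> y) \<circ> (\<lambda>y. (inv\<^bsub>G\<^esub> g, y)))"
    by (rule continuous_map_compose[OF pc mc])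
  then have cm: "continuous_map T T (\<lambda>y. inv\<^bsub>G\<^esub> g \<otimes>\<^bsub>G\<^esub> y)" by (simp add: o_def)
  have Usub: "U \<subseteq> carrier G" using openin_subset[OF U] top by simp
  have "(\<lambda>u. g \<otimes>\<^bsub>G\<^esub> u) ` U = {y \<in> topspace T. inv\<^bsub>G\<^esub> g \<otimes>\<^bsub>G\<^esub> y \<in> U}"
  proof (intro equalityI subsetI)
    fix y assume "y \<in> (\<lambda>u. g \<otimes>\<^bsub>G\<^esub> u) ` U"
    then obtain u where u: "u \<in> U" "y = g \<otimes>\<^bsub>G\<^esub> u" by blast
    have uc: "u \<in> carrier G" using u Usub by blast
    have yc: "y \<in> carrier G" using u(2) grp g uc by (simp add: group.is_monoid monoid.m_closed)
    have "u = inv\<^bsub>G\<^esub> g \<otimes>\<^bsub>G\<^esub> y" using group.inv_solve_left[OF grp uc g yc] u(2) by simp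
    then have "inv\<^bsub>G\<^esub> g \<otimes>\<^bsub>G\<^esub> y = u" by simp
    moreover note yc
    ultimately show "y \<in> {y \<in> topspace T. inv\<^bsub>G\<^esub> g \<otimes>\<^bsub>G\<^esub> y \<in> U}" using u top by simp
  next
    fix y assume y: "y \<in> {y \<in> topspace T. inv\<^bsub>G\<^esub> g \<otimes>\<^bsub>G\<^esub> y \<in> U}"
    then have yc: "y \<in> carrier G" and yu: "inv\<^bsub>G\<^esub> g \<otimes>\<^bsub>G\<^esub> y \<in> U" using top by auto
    have ic: "inv\<^bsub>G\<^esub> g \<otimes>\<^bsub>G\<^esub> y \<in> carrier G"
      using grp g yc by (simp add: group.inv_closed group.is_monoid monoid.m_closed)
    have "y = g \<otimes>\<^bsub>G\<^esub> (inv\<^bsub>G\<^esub> g \<otimes>\<^bsub>G\<^esub> y)" using group.inv_solve_left[OF grp ic g yc] by simp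
    then have "g \<otimes>\<^bsub>G\<^esub> (inv\<^bsub>G\<^esub> g \<otimes>\<^bsub>G\<^esub> y) = y" by simp
    then show "y \<in> (\<lambda>u. g \<otimes>\<^bsub>G\<^esub> u) ` U" using yu by (metis image_eqI)
  qed
  then show ?thesis using openin_continuous_map_preimage[OF cm U] by simp
qed

text \<open>Left cosets of stabilizers are open for smooth actions of topological groups; unlike
  being a topological group, this is readily checked for \<open>G \<times> H\<close> acting on \<open>X \<times> Y\<close>.\<close>

definition stabilizer_cosets_open :: "'g monoid \<Rightarrow> 'g topology \<Rightarrow> ('a, 'g) gset \<Rightarrow> bool" where
  "stabilizer_cosets_open G T A \<longleftrightarrow> (\<forall>x\<in>fst A. \<forall>g\<in>carrier G.
     openin T ((\<lambda>u. g \<otimes>\<^bsub>G\<^esub> u) ` {k \<in> carrier G. snd A k x = x}))"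

lemma topgroup_stabilizer_cosets_open:
  assumes tg: "topgroup G T" and smooth: "smooth_action G T A"
  shows "stabilizer_cosets_open G T A"
  unfolding stabilizer_cosets_open_def
proof (intro ballI)
  fix x g assume x: "x \<in> fst A" and g: "g \<in> carrier G"
  show "openin T ((\<lambda>u. g \<otimes>\<^bsub>G\<^esub> u) ` {k \<in> carrier G. snd A k x = x})"
    by (rule topgroup_open_translate[OF tg smooth_action_stabilizer_open[OF smooth x] g])
qed

lemma ext_prod_stabilizer_cosets_open:
  assumes tg: "topgroup G TG" and th: "topgroup H TH" and px: "smooth_action G TG X" and py: "smooth_action H TH Y"
  shows "stabilizer_cosets_open (G \<times>\<times> H) (prod_topology TG TH) (ext_prod X Y)"
  unfolding stabilizer_cosets_open_def ext_prod_fst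
proof (intro ballI)
  fix p k assume p: "p \<in> fst X \<times> fst Y" and k: "k \<in> carrier (G \<times>\<times> H)"
  obtain x y where xy: "p = (x, y)" "x \<in> fst X" "y \<in> fst Y" using p by auto
  obtain g h where gh: "k = (g, h)" "g \<in> carrier G" "h \<in> carrier H" using k by auto
  have e: "(\<lambda>u. k \<otimes>\<^bsub>G \<times>\<times> H\<^esub> u) ` {l \<in> carrier (G \<times>\<times> H). snd (ext_prod X Y) l p = p} =
     ((\<lambda>u. g \<otimes>\<^bsub>G\<^esub> u) ` {a \<in> carrier G. snd X a x = x}) \<times> ((\<lambda>u. h \<otimes>\<^bsub>H\<^esub> u) ` {b \<in> carrier H. snd Y b y = y})"
    unfolding xy(1) ext_prod_stabilizer[OF xy(2,3)] gh(1) by (auto simp: image_iff)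
  show "openin (prod_topology TG TH) ((\<lambda>u. k \<otimes>\<^bsub>G \<times>\<times> H\<^esub> u) ` {l \<in> carrier (G \<times>\<times> H). snd (ext_prod X Y) l p = p})"
    unfolding e openin_prod_Times_iff
    using topgroup_open_translate[OF tg smooth_action_stabilizer_open[OF px xy(2)] gh(2)]
          topgroup_open_translate[OF th smooth_action_stabilizer_open[OF py xy(3)] gh(3)] by blast
qed

definition quotient_gset :: "('a, 'g) gset \<Rightarrow> ('a \<times> 'a) set \<Rightarrow> ('a set, 'g) gset" where
  "quotient_gset A R = (fst A // R, \<lambda>g C. snd A g ` C)"

definition invariant_rel :: "'g monoid \<Rightarrow> ('a, 'g) gset \<Rightarrow> ('a \<times> 'a) set \<Rightarrow> bool" where
  "invariant_rel G A R \<longleftrightarrow> (\<forall>g\<in>carrier G. \<forall>x y. (x, y) \<in> R \<longrightarrow> (snd A g x, snd A g y) \<in> R)"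

lemma quotient_gset_class_act:
  assumes grp: "group G" and smooth: "smooth_action G T A" and eq: "equiv (fst A) R" and ri: "invariant_rel G A R"
    and g: "g \<in> carrier G" and x: "x \<in> fst A"
  shows "snd A g ` (R `` {x}) = R `` {snd A g x}"
proof (intro equalityI subsetI)
  fix z assume "z \<in> snd A g ` (R `` {x})"
  then obtain y where y: "(x, y) \<in> R" "z = snd A g y" by blast
  then show "z \<in> R `` {snd A g x}" using ri g unfolding invariant_rel_def by blast
next
  fix z assume "z \<in> R `` {snd A g x}"
  then have z: "(snd A g x, z) \<in> R" by simp
  have zA: "z \<in> fst A" using z eq unfolding equiv_def refl_on_def by blast
  have ig: "inv\<^bsub>G\<^esub> g \<in> carrier G" using grp g by (simp add: group.inv_closed)
  have "(snd A (inv\<^bsub>G\<^esub> g) (snd A g x), snd A (inv\<^bsub>G\<^esub> g) z) \<in> R"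
    using ri ig z unfolding invariant_rel_def by blast
  then have "(x, snd A (inv\<^bsub>G\<^esub> g) z) \<in> R" using smooth_action_inv_left[OF grp smooth g x] by simp
  moreover have "z = snd A g (snd A (inv\<^bsub>G\<^esub> g) z)" using smooth_action_inv_right[OF grp smooth g zA] by simp
  ultimately show "z \<in> snd A g ` (R `` {x})" by blast
qed

lemma quotient_gset_fst: "fst (quotient_gset A R) = fst A // R" by (simp add: quotient_gset_def)
lemma quotient_gset_act: "snd (quotient_gset A R) g C = snd A g ` C" by (simp add: quotient_gset_def)

text \<open>The orbit map of a point is locally constant on cosets of its stabilizer, so preimages
  of arbitrary sets are open.\<close>

lemma openin_orbit_map_preimage:
  assumes grp: "group G" and smooth: "smooth_action G T A" and co: "stabilizer_cosets_open G T A"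
    and x: "x \<in> fst A"
  shows "openin T {g \<in> carrier G. snd A g x \<in> B}"
proof (subst openin_subopen, intro ballI)
  fix g assume gB: "g \<in> {g \<in> carrier G. snd A g x \<in> B}"
  let ?W = "(\<lambda>u. g \<otimes>\<^bsub>G\<^esub> u) ` {k \<in> carrier G. snd A k x = x}"
  have "openin T ?W" using co x gB unfolding stabilizer_cosets_open_def by blast
  moreover have "g \<in> ?W"
  proof -
    have "g \<otimes>\<^bsub>G\<^esub> \<one>\<^bsub>G\<^esub> = g" using grp gB by (simp add: group.is_monoid monoid.r_one)
    moreover have "\<one>\<^bsub>G\<^esub> \<in> {k \<in> carrier G. snd A k x = x}"
      using grp smooth_action_one[OF smooth x] by (simp add: group.is_monoid monoid.one_closed)
    ultimately show ?thesis by (metis image_eqI)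
  qed
  moreover have "?W \<subseteq> {g \<in> carrier G. snd A g x \<in> B}"
  proof
    fix y assume "y \<in> ?W"
    then obtain u where u: "u \<in> carrier G" "snd A u x = x" "y = g \<otimes>\<^bsub>G\<^esub> u" by blast
    have "snd A y x = snd A g x" using smooth_action_mult[OF smooth _ u(1) x, of g] gB u by simp
    moreover have "y \<in> carrier G" using u gB grp by (simp add: group.is_monoid monoid.m_closed)
    ultimately show "y \<in> {g \<in> carrier G. snd A g x \<in> B}" using gB by simp
  qed
  ultimately show "\<exists>W. openin T W \<and> g \<in> W \<and> W \<subseteq> {g \<in> carrier G. snd A g x \<in> B}" by blast
qed

lemma smooth_action_quotient_gset:
  assumes grp: "group G" and smooth: "smooth_action G T A" and eq: "equiv (fst A) R" and ri: "invariant_rel G A R"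
    and co: "stabilizer_cosets_open G T A"
  shows "smooth_action G T (quotient_gset A R)"
  unfolding smooth_action_def quotient_gset_fst quotient_gset_act
proof (intro conjI ballI)
  fix g C assume g: "g \<in> carrier G" and C: "C \<in> fst A // R"
  then obtain x where x: "x \<in> fst A" "C = R `` {x}" by (auto elim: quotientE)
  show "snd A g ` C \<in> fst A // R" using quotient_gset_class_act[OF grp smooth eq ri g x(1)] x smooth_action_closed[OF smooth g x(1)]
    by (simp add: quotientI)
next
  fix C assume C: "C \<in> fst A // R"
  then have "C \<subseteq> fst A" using eq by (simp add: in_quotient_imp_subset)
  then show "snd A \<one>\<^bsub>G\<^esub> ` C = C" using smooth_action_one[OF smooth] by (simp add: subset_iff image_iff)
next
  fix g h C assume g: "g \<in> carrier G" and h: "h \<in> carrier G" and C: "C \<in> fst A // R"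
  then have "C \<subseteq> fst A" using eq by (simp add: in_quotient_imp_subset)
  then show "snd A (g \<otimes>\<^bsub>G\<^esub> h) ` C = snd A g ` snd A h ` C"
    using smooth_action_mult[OF smooth g h] by (auto simp: image_image subset_iff intro!: image_cong)
next
  fix C assume C: "C \<in> fst A // R"
  then obtain x where x: "x \<in> fst A" "C = R `` {x}" by (auto elim: quotientE)
  let ?V = "{g \<in> carrier G. snd A g ` C = C}"
  have V: "?V = {g \<in> carrier G. (snd A g x, x) \<in> R}"
  proof (intro Collect_cong conj_cong refl)
    fix g assume g: "g \<in> carrier G"
    have "snd A g ` C = R `` {snd A g x}" using quotient_gset_class_act[OF grp smooth eq ri g x(1)] x by simp
    then show "(snd A g ` C = C) = ((snd A g x, x) \<in> R)"
      using x eq smooth_action_closed[OF smooth g x(1)] by (simp add: equiv_class_eq_iff)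
  qed
  have "openin T {g \<in> carrier G. snd A g x \<in> {y. (y, x) \<in> R}}"
    by (rule openin_orbit_map_preimage[OF grp smooth co x(1)])
  then show "openin T {g \<in> carrier G. snd A g ` C = C}" using V by simp
qed

lemma gmap_quotient_gset:
  assumes grp: "group G" and smooth: "smooth_action G T A" and eq: "equiv (fst A) R" and ri: "invariant_rel G A R"
  shows "gmap G A (quotient_gset A R) (\<lambda>x. R `` {x})"
  unfolding gmap_def quotient_gset_fst quotient_gset_act
  using quotient_gset_class_act[OF grp smooth eq ri] by (auto intro: quotientI)

lemma quotient_gset_surj: "(\<lambda>x. R `` {x}) ` fst A = fst (quotient_gset A R)"
  unfolding quotient_gset_fst quotient_def by blast

lemma transitive_quotient_gset:
  assumes grp: "group G" and smooth: "smooth_action G T A" and eq: "equiv (fst A) R" and ri: "invariant_rel G A R"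
    and tr: "transitive_gset G A"
  shows "transitive_gset G (quotient_gset A R)"
  unfolding transitive_gset_def
proof (intro conjI ballI)
  show "fst (quotient_gset A R) \<noteq> {}" using tr unfolding transitive_gset_def quotient_gset_fst by (simp add: quotient_def)
next
  fix C D assume C: "C \<in> fst (quotient_gset A R)" and D: "D \<in> fst (quotient_gset A R)"
  obtain x where x: "x \<in> fst A" "C = R `` {x}" using C unfolding quotient_gset_fst by (auto elim: quotientE)
  obtain y where y: "y \<in> fst A" "D = R `` {y}" using D unfolding quotient_gset_fst by (auto elim: quotientE)
  obtain g where g: "g \<in> carrier G" "snd A g x = y" using tr x y unfolding transitive_gset_def by blast
  have "snd (quotient_gset A R) g C = D" unfolding quotient_gset_act using quotient_gset_class_act[OF grp smooth eq ri g(1) x(1)] x y g by simp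
  then show "\<exists>g\<in>carrier G. snd (quotient_gset A R) g C = D" using g by blast
qed

lemma is_gset_quotient_gset:
  assumes grp: "group G" and smooth: "smooth_action G T A" and eq: "equiv (fst A) R" and ri: "invariant_rel G A R"
    and co: "stabilizer_cosets_open G T A" and tr: "transitive_gset G A"
  shows "is_gset G T (quotient_gset A R)"
  using is_gset_if_transitive[OF grp smooth_action_quotient_gset[OF assms(1-5)] transitive_quotient_gset[OF grp smooth eq ri tr]] .

definition std_quotient :: "'g monoid \<Rightarrow> ('a, 'g) gset \<Rightarrow> ('a \<times> 'a) set \<Rightarrow> (nat \<times> 'g set, 'g) gset" where
  "std_quotient G A R = std_copy G (quotient_gset A R)"

definition std_quotient_map :: "'g monoid \<Rightarrow> ('a, 'g) gset \<Rightarrow> ('a \<times> 'a) set \<Rightarrow> 'a \<Rightarrow> nat \<times> 'g set" where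
  "std_quotient_map G A R x = std_code G (quotient_gset A R) (R `` {x})"

lemma std_quotient:
  assumes grp: "group G" and smooth: "smooth_action G T A" and co: "stabilizer_cosets_open G T A"
    and tr: "transitive_gset G A" and eq: "equiv (fst A) R" and ri: "invariant_rel G A R"
  shows "is_gset G T (std_quotient G A R)"
    and "transitive_gset G (std_quotient G A R)"
    and "gmap G A (std_quotient G A R) (std_quotient_map G A R)"
    and "std_quotient_map G A R ` fst A = fst (std_quotient G A R)"
    and "x \<in> fst A \<Longrightarrow> x' \<in> fst A \<Longrightarrow> std_quotient_map G A R x = std_quotient_map G A R x' \<longleftrightarrow> (x, x') \<in> R"
proof -
  have Q: "is_gset G T (quotient_gset A R)" by (rule is_gset_quotient_gset[OF grp smooth eq ri co tr])
  show "is_gset G T (std_quotient G A R)"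
    unfolding std_quotient_def by (rule is_gset_std_copy[OF grp Q])
  show "transitive_gset G (std_quotient G A R)"
    unfolding std_quotient_def by (rule transitive_std_copy[OF grp Q transitive_quotient_gset[OF grp smooth eq ri tr]])
  show "gmap G A (std_quotient G A R) (std_quotient_map G A R)"
    using gmap_comp[OF gmap_quotient_gset[OF grp smooth eq ri] gmap_std_code[OF grp Q]]
    unfolding std_quotient_def std_quotient_map_def by (simp add: o_def)
  show "std_quotient_map G A R ` fst A = fst (std_quotient G A R)"
    unfolding std_quotient_def std_quotient_map_def std_copy_fst quotient_gset_surj[symmetric] by (simp add: image_image)
  assume x: "x \<in> fst A" and x': "x' \<in> fst A"
  have "R `` {x} \<in> fst (quotient_gset A R)" "R `` {x'} \<in> fst (quotient_gset A R)"
    using x x' unfolding quotient_gset_fst by (auto intro: quotientI)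
  then have "std_quotient_map G A R x = std_quotient_map G A R x' \<longleftrightarrow> R `` {x} = R `` {x'}"
    unfolding std_quotient_map_def by (rule std_code_eq_iff[OF grp Q])
  also have "\<dots> \<longleftrightarrow> (x, x') \<in> R" by (rule eq_equiv_class_iff[OF eq x x'])
  finally show "std_quotient_map G A R x = std_quotient_map G A R x' \<longleftrightarrow> (x, x') \<in> R" .
qed

lemma std_quotient_kernel:
  assumes "group G" "smooth_action G T A" "stabilizer_cosets_open G T A" "transitive_gset G A"
    and eq: "equiv (fst A) R" and "invariant_rel G A R"
  shows "{p \<in> fst A \<times> fst A. std_quotient_map G A R (fst p) = std_quotient_map G A R (snd p)} = R"
proof (intro equalityI subsetI)
  fix p assume "p \<in> {p \<in> fst A \<times> fst A. std_quotient_map G A R (fst p) = std_quotient_map G A R (snd p)}"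
  then show "p \<in> R" using std_quotient(5)[OF assms, of "fst p" "snd p"] by (simp add: mem_Times_iff)
next
  fix p assume p: "p \<in> R"
  moreover have "p \<in> fst A \<times> fst A" using p eq unfolding equiv_def refl_on_def by blast
  ultimately show "p \<in> {p \<in> fst A \<times> fst A. std_quotient_map G A R (fst p) = std_quotient_map G A R (snd p)}"
    using std_quotient(5)[OF assms, of "fst p" "snd p"] by (simp add: mem_Times_iff)
qed

section \<open>Pro-oligomorphic and split groups\<close>

lemma stabilizer_subgroup:
  assumes grp: "group G" and smooth: "smooth_action G T X" and x: "x \<in> fst X"
  shows "subgroup {g \<in> carrier G. snd X g x = x} G"
proof (rule group.subgroupI[OF grp])
  show "{g \<in> carrier G. snd X g x = x} \<subseteq> carrier G" by blast
  have "\<one>\<^bsub>G\<^esub> \<in> carrier G" using grp by (simp add: group.is_monoid monoid.one_closed)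
  then show "{g \<in> carrier G. snd X g x = x} \<noteq> {}" using smooth_action_one[OF smooth x] by blast
next
  fix a assume a: "a \<in> {g \<in> carrier G. snd X g x = x}"
  have "snd X (inv\<^bsub>G\<^esub> a) (snd X a x) = x" using smooth_action_inv_left[OF grp smooth _ x] a by blast
  then show "inv\<^bsub>G\<^esub> a \<in> {g \<in> carrier G. snd X g x = x}" using a grp by (simp add: group.inv_closed)
next
  fix a b assume a: "a \<in> {g \<in> carrier G. snd X g x = x}" and b: "b \<in> {g \<in> carrier G. snd X g x = x}"
  have "snd X (a \<otimes>\<^bsub>G\<^esub> b) x = snd X a (snd X b x)" using smooth_action_mult[OF smooth _ _ x] a b by blast
  then show "a \<otimes>\<^bsub>G\<^esub> b \<in> {g \<in> carrier G. snd X g x = x}" using a b grp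
    by (simp add: group.is_monoid monoid.m_closed)
qed

lemma pro_oligomorphic_group: "pro_oligomorphic G T \<Longrightarrow> group G"
  unfolding pro_oligomorphic_def topgroup_def by blast
lemma pro_oligomorphic_topgroup: "pro_oligomorphic G T \<Longrightarrow> topgroup G T"
  unfolding pro_oligomorphic_def by blast
lemma pro_oligomorphic_topspace: "pro_oligomorphic G T \<Longrightarrow> topspace T = carrier G"
  unfolding pro_oligomorphic_def topgroup_def by blast

context
  fixes G :: "'g monoid" and T :: "'g topology" and X :: "('a, 'g) gset" and x0 :: 'a
  assumes grp: "group G" and smooth: "smooth_action G T X" and tr: "transitive_gset G X" and x0: "x0 \<in> fst X"
begin

lemma diag_prod_orbit_base_point:
  assumes "x \<in> fst X" "x' \<in> fst X"
  obtains c where "c \<in> carrier G" "orbit G (diag_prod X X) (x, x') = orbit G (diag_prod X X) (x0, snd X c x0)"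
proof -
  obtain a where a: "a \<in> carrier G" "snd X a x0 = x" using transitive_gsetE[OF tr x0 assms(1)] .
  obtain b where b: "b \<in> carrier G" "snd X b x0 = x'" using transitive_gsetE[OF tr x0 assms(2)] .
  define c where "c = inv\<^bsub>G\<^esub> a \<otimes>\<^bsub>G\<^esub> b"
  have ia: "inv\<^bsub>G\<^esub> a \<in> carrier G" using grp a by (simp add: group.inv_closed)
  have c: "c \<in> carrier G" unfolding c_def using grp ia b by (simp add: group.is_monoid monoid.m_closed)
  have "snd X c x0 = snd X (inv\<^bsub>G\<^esub> a) x'" unfolding c_def using smooth_action_mult[OF smooth ia b(1) x0] b by simp
  then have "snd (diag_prod X X) a (x0, snd X c x0) = (x, x')"
    using a smooth_action_inv_right[OF grp smooth a(1) assms(2)] by (simp add: diag_prod_act)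
  moreover have "(x0, snd X c x0) \<in> fst (diag_prod X X)"
    using x0 smooth_action_closed[OF smooth c x0] by (simp add: diag_prod_fst)
  ultimately show ?thesis
    using that[OF c] orbit_act_eq[OF grp smooth_action_diag_prod[OF smooth smooth] a(1)] by metis
qed

lemma diag_prod_orbit_double_coset:
  assumes c: "c \<in> carrier G" and u: "u \<in> carrier G" "snd X u x0 = x0" and v: "v \<in> carrier G" "snd X v x0 = x0"
  shows "orbit G (diag_prod X X) (x0, snd X (u \<otimes>\<^bsub>G\<^esub> c \<otimes>\<^bsub>G\<^esub> v) x0) = orbit G (diag_prod X X) (x0, snd X c x0)"
proof -
  have "u \<otimes>\<^bsub>G\<^esub> c \<in> carrier G" using grp u c by (simp add: group.is_monoid monoid.m_closed)
  then have "snd X (u \<otimes>\<^bsub>G\<^esub> c \<otimes>\<^bsub>G\<^esub> v) x0 = snd X u (snd X c x0)"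
    using smooth_action_mult[OF smooth _ v(1) x0] smooth_action_mult[OF smooth u(1) c x0] v(2) by simp
  then have "(x0, snd X (u \<otimes>\<^bsub>G\<^esub> c \<otimes>\<^bsub>G\<^esub> v) x0) = snd (diag_prod X X) u (x0, snd X c x0)"
    using u(2) by (simp add: diag_prod_act)
  moreover have "(x0, snd X c x0) \<in> fst (diag_prod X X)"
    using x0 smooth_action_closed[OF smooth c x0] by (simp add: diag_prod_fst)
  ultimately show ?thesis using orbit_act_eq[OF grp smooth_action_diag_prod[OF smooth smooth] u(1)] by simp
qed

end

text \<open>The orbits of \<open>X \<times> X\<close> correspond to the double cosets \<open>U c U\<close> of the stabilizer
  \<open>U\<close> of a point \<open>x0\<close>, via \<open>c \<mapsto> (x0, c x0)\<close>.\<close>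

lemma finite_orbits_diag_prod_self:
  assumes pro: "pro_oligomorphic G T" and smooth: "smooth_action G T X" and tr: "transitive_gset G X"
  shows "finite (orbit G (diag_prod X X) ` (fst X \<times> fst X))"
proof -
  have grp: "group G" using pro pro_oligomorphic_group by blast
  obtain x0 where x0: "x0 \<in> fst X" using tr unfolding transitive_gset_def by blast
  define U where "U = {g \<in> carrier G. snd X g x0 = x0}"
  have "open_subgroup G T U" unfolding open_subgroup_def U_def
    using stabilizer_subgroup[OF grp smooth x0] smooth_action_stabilizer_open[OF smooth x0] by blast
  then have fin: "finite {double_coset G U g U | g. g \<in> carrier G}" and oneU: "\<one>\<^bsub>G\<^esub> \<in> U"
    using pro unfolding pro_oligomorphic_def open_subgroup_def by (blast, simp add: subgroup.one_closed)
  define f where "f D = orbit G (diag_prod X X) (x0, snd X (SOME k. k \<in> D) x0)" for D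
  have "orbit G (diag_prod X X) ` (fst X \<times> fst X) \<subseteq> f ` {double_coset G U g U | g. g \<in> carrier G}"
  proof
    fix Ob assume "Ob \<in> orbit G (diag_prod X X) ` (fst X \<times> fst X)"
    then obtain x x' where "x \<in> fst X" "x' \<in> fst X" "Ob = orbit G (diag_prod X X) (x, x')" by blast
    then obtain c where c: "c \<in> carrier G" "Ob = orbit G (diag_prod X X) (x0, snd X c x0)"
      using diag_prod_orbit_base_point[OF grp smooth tr x0] by metis
    define D where "D = double_coset G U c U"
    have "\<one>\<^bsub>G\<^esub> \<otimes>\<^bsub>G\<^esub> c \<otimes>\<^bsub>G\<^esub> \<one>\<^bsub>G\<^esub> \<in> D" unfolding D_def double_coset_def using oneU by blast
    then have "(SOME k. k \<in> D) \<in> D" by (rule someI)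
    then obtain u v where uv: "u \<in> U" "v \<in> U" "(SOME k. k \<in> D) = u \<otimes>\<^bsub>G\<^esub> c \<otimes>\<^bsub>G\<^esub> v"
      unfolding D_def double_coset_def by blast
    then have "Ob = f D"
      unfolding f_def using diag_prod_orbit_double_coset[OF grp smooth tr x0 c(1)] c(2) by (simp add: U_def)
    moreover have "D \<in> {double_coset G U g U | g. g \<in> carrier G}" unfolding D_def using c by blast
    ultimately show "Ob \<in> f ` {double_coset G U g U | g. g \<in> carrier G}" by blast
  qed
  then show ?thesis using fin by (meson finite_imageI finite_subset)
qed

lemma is_gset_diag_prod_self:
  assumes pro: "pro_oligomorphic G T" and X: "is_gset G T X" and tr: "transitive_gset G X"
  shows "is_gset G T (diag_prod X X)"
  using finite_orbits_diag_prod_self[OF pro is_gset_smooth[OF X] tr] smooth_action_diag_prod[OF is_gset_smooth[OF X] is_gset_smooth[OF X]]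
  by (intro is_gsetI) (simp_all add: diag_prod_fst)

lemma equiv_fix_snd:
  assumes "equiv (A \<times> B) E" "b \<in> B"
  shows "equiv A {(a, a'). ((a, b), (a', b)) \<in> E}"
  using assms unfolding equiv_def refl_on_def sym_def trans_def by blast

lemma equiv_fix_fst:
  assumes "equiv (A \<times> B) E" "a \<in> A"
  shows "equiv B {(b, b'). ((a, b), (a, b')) \<in> E}"
  using assms unfolding equiv_def refl_on_def sym_def trans_def by blast

lemma gmap_ext_prod_coordinates:
  assumes grpG: "group G" and grpH: "group H"
    and X: "is_gset G TG X" "transitive_gset G X" and Y: "is_gset H TH Y" "transitive_gset H Y"
    and X1: "is_gset G TG' X1" and Y1: "is_gset H TH' Y1"
    and f: "gmap (G \<times>\<times> H) (ext_prod X Y) (ext_prod X1 Y1) f"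
  shows "a \<in> fst X \<Longrightarrow> b \<in> fst Y \<Longrightarrow> b' \<in> fst Y \<Longrightarrow> fst (f (a, b)) = fst (f (a, b'))"
    and "a \<in> fst X \<Longrightarrow> a' \<in> fst X \<Longrightarrow> b \<in> fst Y \<Longrightarrow> snd (f (a, b)) = snd (f (a', b))"
proof -
  have f_act: "f (snd X g a, snd Y h b) = (snd X1 g (fst (f (a, b))), snd Y1 h (snd (f (a, b))))"
    and fin: "f (a, b) \<in> fst X1 \<times> fst Y1"
    if "g \<in> carrier G" "h \<in> carrier H" "a \<in> fst X" "b \<in> fst Y" for g h a b
  proof -
    have "f (snd (ext_prod X Y) (g, h) (a, b)) = snd (ext_prod X1 Y1) (g, h) (f (a, b))"
      using f that unfolding gmap_def by (simp add: ext_prod_fst)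
    then show "f (snd X g a, snd Y h b) = (snd X1 g (fst (f (a, b))), snd Y1 h (snd (f (a, b))))"
      by (simp add: ext_prod_act ext_prod_def split_beta)
    show "f (a, b) \<in> fst X1 \<times> fst Y1" using f that unfolding gmap_def by (simp add: ext_prod_fst)
  qed
  have oneG: "\<one>\<^bsub>G\<^esub> \<in> carrier G" and oneH: "\<one>\<^bsub>H\<^esub> \<in> carrier H"
    using grpG grpH by (simp_all add: group.is_monoid monoid.one_closed)
  show "fst (f (a, b)) = fst (f (a, b'))" if a: "a \<in> fst X" and b: "b \<in> fst Y" "b' \<in> fst Y"
  proof -
    obtain h where h: "h \<in> carrier H" "snd Y h b = b'" using transitive_gsetE[OF Y(2) b] .
    have "f (a, b') = f (snd X \<one>\<^bsub>G\<^esub> a, snd Y h b)"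
      using h smooth_action_one[OF is_gset_smooth[OF X(1)] a] by simp
    then show ?thesis using f_act[OF oneG h(1) a b(1)] fin[OF oneG h(1) a b(1)]
        smooth_action_one[OF is_gset_smooth[OF X1]] by (simp add: mem_Times_iff)
  qed
  show "snd (f (a, b)) = snd (f (a', b))" if a: "a \<in> fst X" "a' \<in> fst X" and b: "b \<in> fst Y"
  proof -
    obtain g where g: "g \<in> carrier G" "snd X g a = a'" using transitive_gsetE[OF X(2) a] .
    have "f (a', b) = f (snd X g a, snd Y \<one>\<^bsub>H\<^esub> b)"
      using g smooth_action_one[OF is_gset_smooth[OF Y(1)] b] by simp
    then show ?thesis using f_act[OF g(1) oneH a(1) b] fin[OF g(1) oneH a(1) b]
        smooth_action_one[OF is_gset_smooth[OF Y1]] by (simp add: mem_Times_iff)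
  qed
qed

context
  fixes G :: "'g monoid" and TG :: "'g topology" and H :: "'h monoid" and TH :: "'h topology"
    and X :: "('a, 'g) gset" and Y :: "('b, 'h) gset" and E :: "(('a \<times> 'b) \<times> ('a \<times> 'b)) set"
  assumes proG: "pro_oligomorphic G TG" and proH: "pro_oligomorphic H TH"
    and X: "is_gset G TG X" "transitive_gset G X" and Y: "is_gset H TH Y" "transitive_gset H Y"
    and E: "equiv (fst X \<times> fst Y) E" "invariant_rel (G \<times>\<times> H) (ext_prod X Y) E"
begin

lemma invariant_rel_ext_prod_act:
  assumes "((x, y), (x', y')) \<in> E" "g \<in> carrier G" "h \<in> carrier H"
  shows "((snd X g x, snd Y h y), (snd X g x', snd Y h y')) \<in> E"
proof -
  have "(g, h) \<in> carrier (G \<times>\<times> H)" using assms(2,3) by simp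
  then have "(snd (ext_prod X Y) (g, h) (x, y), snd (ext_prod X Y) (g, h) (x', y')) \<in> E"
    using E(2) assms(1) unfolding invariant_rel_def by blast
  then show ?thesis by (simp add: ext_prod_act)
qed

text \<open>This is where splitness enters: the quotient of \<open>X \<times> Y\<close> by \<open>E\<close> is a transitive
  \<open>G \<times> H\<close>-set, whose standard copy lies in the carrier type required by \<open>split_wrt\<close>, so it is
  isomorphic to a product \<open>X1 \<times> Y1\<close>.\<close>

lemma split_kernel_map:
  assumes split: "split_wrt G TG TYPE('h)"
  obtains X1 :: "(nat \<times> 'g set, 'g) gset" and Y1 :: "(nat \<times> 'h set, 'h) gset" and f
  where "is_gset G TG X1" "is_gset H TH Y1" "gmap (G \<times>\<times> H) (ext_prod X Y) (ext_prod X1 Y1) f"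
    "\<And>p p'. p \<in> fst X \<times> fst Y \<Longrightarrow> p' \<in> fst X \<times> fst Y \<Longrightarrow> f p = f p' \<longleftrightarrow> (p, p') \<in> E"
proof -
  let ?GH = "G \<times>\<times> H" and ?XY = "ext_prod X Y"
  have grp: "group ?GH"
    by (rule DirProd_group[OF pro_oligomorphic_group[OF proG] pro_oligomorphic_group[OF proH]])
  have smooth: "smooth_action ?GH (prod_topology TG TH) ?XY"
    by (rule smooth_action_ext_prod[OF is_gset_smooth[OF X(1)] is_gset_smooth[OF Y(1)]])
  have co: "stabilizer_cosets_open ?GH (prod_topology TG TH) ?XY"
    by (rule ext_prod_stabilizer_cosets_open[OF pro_oligomorphic_topgroup[OF proG]
          pro_oligomorphic_topgroup[OF proH] is_gset_smooth[OF X(1)] is_gset_smooth[OF Y(1)]])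
  have eq: "equiv (fst ?XY) E" using E(1) by (simp add: ext_prod_fst)
  note Q = std_quotient[OF grp smooth co transitive_ext_prod[OF X(2) Y(2)] eq E(2)]
  obtain X1 :: "(nat \<times> 'g set, 'g) gset" and Y1 :: "(nat \<times> 'h set, 'h) gset" and phi
    where X1: "is_gset G TG X1" and Y1: "is_gset H TH Y1"
      and phi: "gmap ?GH (std_quotient ?GH ?XY E) (ext_prod X1 Y1) phi"
        "bij_betw phi (fst (std_quotient ?GH ?XY E)) (fst (ext_prod X1 Y1))"
    using split proH Q(1,2) unfolding split_wrt_def gset_iso_def by blast
  show ?thesis
  proof (rule that[OF X1 Y1 gmap_comp[OF Q(3) phi(1)]])
    fix p p' assume p: "p \<in> fst X \<times> fst Y" "p' \<in> fst X \<times> fst Y"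
    then have p': "p \<in> fst ?XY" "p' \<in> fst ?XY" by (simp_all add: ext_prod_fst)
    let ?c = "std_quotient_map ?GH ?XY E"
    have "?c p \<in> fst (std_quotient ?GH ?XY E)" "?c p' \<in> fst (std_quotient ?GH ?XY E)"
      unfolding Q(4)[symmetric] by (rule imageI[OF p'(1)], rule imageI[OF p'(2)])
    with bij_betw_imp_inj_on[OF phi(2)] have "phi (?c p) = phi (?c p') \<longleftrightarrow> ?c p = ?c p'"
      by (rule inj_on_eq_iff)
    also have "\<dots> \<longleftrightarrow> (p, p') \<in> E" by (rule Q(5)[OF p'])
    finally show "(phi \<circ> ?c) p = (phi \<circ> ?c) p' \<longleftrightarrow> (p, p') \<in> E" by simp
  qed
qed

lemma split_invariant_equiv:
  assumes split: "split_wrt G TG TYPE('h)"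
    and e: "((x, y), (x', y')) \<in> E" and x0: "x0 \<in> fst X" and y0: "y0 \<in> fst Y"
  shows "((x, y0), (x', y0)) \<in> E" and "((x0, y), (x0, y')) \<in> E"
proof -
  obtain X1 :: "(nat \<times> 'g set, 'g) gset" and Y1 :: "(nat \<times> 'h set, 'h) gset" and f
    where X1: "is_gset G TG X1" and Y1: "is_gset H TH Y1"
      and f: "gmap (G \<times>\<times> H) (ext_prod X Y) (ext_prod X1 Y1) f"
      and feq: "\<And>p p'. p \<in> fst X \<times> fst Y \<Longrightarrow> p' \<in> fst X \<times> fst Y \<Longrightarrow> f p = f p' \<longleftrightarrow> (p, p') \<in> E"
    using split_kernel_map[OF split] by blast
  note coord = gmap_ext_prod_coordinates[OF pro_oligomorphic_group[OF proG] pro_oligomorphic_group[OF proH]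
      X Y X1 Y1 f]
  have m: "x \<in> fst X" "y \<in> fst Y" "x' \<in> fst X" "y' \<in> fst Y"
    using e E(1) unfolding equiv_def refl_on_def by blast+
  have ff: "f (x, y) = f (x', y')" using feq e m by simp
  have "f (x, y0) = f (x', y0)"
    using coord(1)[OF m(1) m(2) y0] coord(1)[OF m(3) m(4) y0] coord(2)[OF m(1) m(3) y0] ff
    by (simp add: prod_eq_iff)
  then show "((x, y0), (x', y0)) \<in> E" using feq m y0 by simp
  have "f (x0, y) = f (x0, y')"
    using coord(2)[OF m(1) x0 m(2)] coord(2)[OF m(3) x0 m(4)] coord(1)[OF x0 m(2) m(4)] ff
    by (simp add: prod_eq_iff)
  then show "((x0, y), (x0, y')) \<in> E" using feq m x0 by simp
qed

lemma invariant_equiv_combine: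
  assumes x0: "x0 \<in> fst X" and y0: "y0 \<in> fst Y"
    and r: "((x, y0), (x', y0)) \<in> E" and s: "((x0, y), (x0, y')) \<in> E"
  shows "((x, y), (x', y')) \<in> E"
proof -
  have oneG: "\<one>\<^bsub>G\<^esub> \<in> carrier G" and oneH: "\<one>\<^bsub>H\<^esub> \<in> carrier H"
    using proG proH by (simp_all add: pro_oligomorphic_group group.is_monoid monoid.one_closed)
  have m: "x \<in> fst X" "x' \<in> fst X" "y \<in> fst Y" "y' \<in> fst Y"
    using r s E(1) unfolding equiv_def refl_on_def by blast+
  obtain h where h: "h \<in> carrier H" "snd Y h y0 = y" using transitive_gsetE[OF Y(2) y0 m(3)] .
  obtain g where g: "g \<in> carrier G" "snd X g x0 = x'" using transitive_gsetE[OF X(2) x0 m(2)] .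
  have "((x, y), (x', y)) \<in> E"
    using invariant_rel_ext_prod_act[OF r oneG h(1)] h(2) smooth_action_one[OF is_gset_smooth[OF X(1)]] m
    by simp
  moreover have "((x', y), (x', y')) \<in> E"
    using invariant_rel_ext_prod_act[OF s g(1) oneH] g(2) smooth_action_one[OF is_gset_smooth[OF Y(1)]] m
    by simp
  ultimately show ?thesis using E(1) unfolding equiv_def trans_def by blast
qed

lemma split_invariant_equiv_product:
  assumes split: "split_wrt G TG TYPE('h)"
  obtains R S where "equiv (fst X) R" "invariant_rel G X R" "equiv (fst Y) S" "invariant_rel H Y S"
    "E = {((x, y), (x', y')). (x, x') \<in> R \<and> (y, y') \<in> S}"
proof -
  obtain x0 y0 where x0: "x0 \<in> fst X" and y0: "y0 \<in> fst Y"
    using X(2) Y(2) unfolding transitive_gset_def by blast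
  define R where "R = {(x, x'). ((x, y0), (x', y0)) \<in> E}"
  define S where "S = {(y, y'). ((x0, y), (x0, y')) \<in> E}"
  have oneG: "\<one>\<^bsub>G\<^esub> \<in> carrier G" and oneH: "\<one>\<^bsub>H\<^esub> \<in> carrier H"
    using proG proH by (simp_all add: pro_oligomorphic_group group.is_monoid monoid.one_closed)
  have "invariant_rel G X R"
    unfolding invariant_rel_def R_def
    using invariant_rel_ext_prod_act[OF _ _ oneH] smooth_action_one[OF is_gset_smooth[OF Y(1)] y0] by fastforce
  moreover have "invariant_rel H Y S"
    unfolding invariant_rel_def S_def
    using invariant_rel_ext_prod_act[OF _ oneG] smooth_action_one[OF is_gset_smooth[OF X(1)] x0] by fastforce
  moreover have "E = {((x, y), (x', y')). (x, x') \<in> R \<and> (y, y') \<in> S}"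
  proof (intro equalityI subsetI)
    fix p assume "p \<in> E"
    moreover obtain x y x' y' where "p = ((x, y), (x', y'))" by (metis surj_pair)
    ultimately show "p \<in> {((x, y), (x', y')). (x, x') \<in> R \<and> (y, y') \<in> S}"
      using split_invariant_equiv[OF split _ x0 y0] unfolding R_def S_def by blast
  next
    fix p assume "p \<in> {((x, y), (x', y')). (x, x') \<in> R \<and> (y, y') \<in> S}"
    then show "p \<in> E" using invariant_equiv_combine[OF x0 y0] unfolding R_def S_def by blast
  qed
  ultimately show ?thesis
    using that equiv_fix_snd[OF E(1) y0] equiv_fix_fst[OF E(1) x0] unfolding R_def S_def by blast
qed

end

section \<open>Exact functors and lifted relations\<close>

definition two_gset :: "(nat \<times> 'g set, 'g) gset" where "two_gset = ({(0, {}), (1, {})}, \<lambda>g z. z)"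

lemma is_gset_two: assumes "topspace T = carrier G" shows "is_gset G T (two_gset :: (nat \<times> 'g set, 'g) gset)"
proof (rule is_gsetI)
  show "smooth_action G T (two_gset :: (nat \<times> 'g set, 'g) gset)" unfolding smooth_action_def two_gset_def
    using assms openin_topspace[of T] by simp
  show "finite (orbit G two_gset ` fst (two_gset :: (nat \<times> 'g set, 'g) gset))" unfolding two_gset_def by simp
qed

locale exact_gset_functor =
  fixes G :: "'g monoid" and TG :: "'g topology" and K :: "'k monoid" and TK :: "'k topology"
    and Fo :: "(nat \<times> 'g set, 'g) gset \<Rightarrow> (nat \<times> 'k set, 'k) gset"
    and Fm :: "(nat \<times> 'g set, 'g) gset \<Rightarrow> (nat \<times> 'g set, 'g) gset
                  \<Rightarrow> (nat \<times> 'g set \<Rightarrow> nat \<times> 'g set) \<Rightarrow> (nat \<times> 'k set \<Rightarrow> nat \<times> 'k set)"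
  assumes pro: "pro_oligomorphic G TG" and exact: "exact_functor G TG K TK Fo Fm"
begin

lemma grp: "group G" using pro by (rule pro_oligomorphic_group)
lemma topspace_eq: "topspace TG = carrier G" using pro by (rule pro_oligomorphic_topspace)

lemma functorial: "is_functor G TG K TK Fo Fm" using exact unfolding exact_functor_def by (rule conjunct1)

lemma Fo_gset: assumes "is_gset G TG A" shows "is_gset K TK (Fo A)"
proof -
  have "\<forall>X. is_gset G TG X \<longrightarrow> is_gset K TK (Fo X)" using functorial unfolding is_functor_def by (rule conjunct1)
  then show ?thesis using assms by blast
qed

lemma Fm_gmap: assumes "is_gset G TG A" "is_gset G TG B" "gmap G A B f"
  shows "gmap K (Fo A) (Fo B) (Fm A B f)"
proof -
  have "\<forall>X Y f. is_gset G TG X \<and> is_gset G TG Y \<and> gmap G X Y f \<longrightarrow> gmap K (Fo X) (Fo Y) (Fm X Y f)"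
    using functorial unfolding is_functor_def by (elim conjE)
  then show ?thesis using assms by blast
qed

lemma Fm_cong: assumes "is_gset G TG A" "is_gset G TG B" "gmap G A B f" "gmap G A B f'"
    "\<And>x. x \<in> fst A \<Longrightarrow> f x = f' x" "z \<in> fst (Fo A)"
  shows "Fm A B f z = Fm A B f' z"
proof -
  have "\<forall>X Y f f'. is_gset G TG X \<and> is_gset G TG Y \<and> gmap G X Y f \<and> gmap G X Y f' \<and>
        (\<forall>x\<in>fst X. f x = f' x) \<longrightarrow> (\<forall>z\<in>fst (Fo X). Fm X Y f z = Fm X Y f' z)"
    using functorial unfolding is_functor_def by (elim conjE)
  then show ?thesis using assms by blast
qed

lemma Fm_id: assumes "is_gset G TG A" "z \<in> fst (Fo A)" shows "Fm A A id z = z"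
proof -
  have "\<forall>X. is_gset G TG X \<longrightarrow> (\<forall>z\<in>fst (Fo X). Fm X X id z = z)"
    using functorial unfolding is_functor_def by (elim conjE)
  then show ?thesis using assms by blast
qed

lemma Fm_comp: assumes "is_gset G TG A" "is_gset G TG B" "is_gset G TG C" "gmap G A B f" "gmap G B C g"
    "z \<in> fst (Fo A)"
  shows "Fm A C (g \<circ> f) z = Fm B C g (Fm A B f z)"
proof -
  have "\<forall>X Y Z f g. is_gset G TG X \<and> is_gset G TG Y \<and> is_gset G TG Z \<and>
        gmap G X Y f \<and> gmap G Y Z g \<longrightarrow>
        (\<forall>z\<in>fst (Fo X). Fm X Z (g \<circ> f) z = Fm Y Z g (Fm X Y f z))"
    using functorial unfolding is_functor_def by (elim conjE)
  then show ?thesis using assms by blast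
qed

lemma preserves_product: assumes "is_gset G TG A" "is_gset G TG B" "is_gset G TG Q" "is_product G A B Q p1 p2"
  shows "is_product K (Fo A) (Fo B) (Fo Q) (Fm Q A p1) (Fm Q B p2)"
proof -
  have "\<forall>A B P p1 p2. is_gset G TG A \<and> is_gset G TG B \<and> is_gset G TG P \<and>
        is_product G A B P p1 p2 \<longrightarrow>
        is_product K (Fo A) (Fo B) (Fo P) (Fm P A p1) (Fm P B p2)"
    using exact unfolding exact_functor_def by (elim conjE)
  then show ?thesis using assms by blast
qed

lemma preserves_equalizer: assumes "is_gset G TG A" "is_gset G TG B" "is_gset G TG E" "gmap G A B f" "gmap G A B g"
    "is_equalizer G A B f g E e"
  shows "is_equalizer K (Fo A) (Fo B) (Fm A B f) (Fm A B g) (Fo E) (Fm E A e)"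
proof -
  have "\<forall>A B f g E e. is_gset G TG A \<and> is_gset G TG B \<and> is_gset G TG E \<and>
        gmap G A B f \<and> gmap G A B g \<and> is_equalizer G A B f g E e \<longrightarrow>
        is_equalizer K (Fo A) (Fo B) (Fm A B f) (Fm A B g) (Fo E) (Fm E A e)"
    using exact unfolding exact_functor_def by (elim conjE)
  then show ?thesis using assms by blast
qed

lemma preserves_initial: assumes "is_gset G TG A" "fst A = {}" shows "fst (Fo A) = {}"
proof -
  have "\<forall>X. is_gset G TG X \<and> is_initial X \<longrightarrow> is_initial (Fo X)"
    using exact unfolding exact_functor_def by (elim conjE)
  then show ?thesis using assms unfolding is_initial_def by blast
qed

lemma preserves_coproduct: assumes "is_gset G TG A" "is_gset G TG B" "is_gset G TG C" "is_coproduct G A B C i1 i2"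
  shows "is_coproduct K (Fo A) (Fo B) (Fo C) (Fm A C i1) (Fm B C i2)"
proof -
  have "\<forall>A B C i1 i2. is_gset G TG A \<and> is_gset G TG B \<and> is_gset G TG C \<and>
        is_coproduct G A B C i1 i2 \<longrightarrow>
        is_coproduct K (Fo A) (Fo B) (Fo C) (Fm A C i1) (Fm B C i2)"
    using exact unfolding exact_functor_def by (elim conjE)
  then show ?thesis using assms by blast
qed

text \<open>An injection is the equalizer of the indicator function of its image and a constant map
  into a two-point G-set, and exactness preserves this equalizer.\<close>

lemma preserves_inj:
  assumes A: "is_gset G TG A" and B: "is_gset G TG B" and e: "gmap G A B e" and inj: "inj_on e (fst A)"
  shows "inj_on (Fm A B e) (fst (Fo A))"
proof -
  define chi where "chi z = (if z \<in> e ` fst A then (1::nat, {}::'g set) else (0, {}))" for z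
  define c1 where "c1 z = (1::nat, {}::'g set)" for z :: "nat \<times> 'g set"
  have smoothB: "smooth_action G TG B" using B by (rule is_gset_smooth)
  have eA: "e ` fst A \<subseteq> fst B" using e unfolding gmap_def by blast
  have inv: "snd B g z \<in> e ` fst A \<longleftrightarrow> z \<in> e ` fst A" if g: "g \<in> carrier G" and z: "z \<in> fst B" for g z
  proof
    assume "z \<in> e ` fst A"
    then obtain a where a: "a \<in> fst A" "z = e a" by blast
    have "snd B g z = e (snd A g a)" using e a g unfolding gmap_def by simp
    moreover have "snd A g a \<in> fst A" using smooth_action_closed[OF is_gset_smooth[OF A] g a(1)] .
    ultimately show "snd B g z \<in> e ` fst A" by blast
  next
    assume "snd B g z \<in> e ` fst A"
    then obtain a where a: "a \<in> fst A" "snd B g z = e a" by blast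
    have ig: "inv\<^bsub>G\<^esub> g \<in> carrier G" using grp g by (simp add: group.inv_closed)
    have "z = snd B (inv\<^bsub>G\<^esub> g) (snd B g z)" using smooth_action_inv_left[OF grp smoothB g z] by simp
    also have "\<dots> = e (snd A (inv\<^bsub>G\<^esub> g) a)" using e a ig unfolding gmap_def by simp
    finally show "z \<in> e ` fst A" using smooth_action_closed[OF is_gset_smooth[OF A] ig a(1)] by blast
  qed
  have two: "is_gset G TG (two_gset :: (nat \<times> 'g set, 'g) gset)" using topspace_eq by (rule is_gset_two)
  have gchi: "gmap G B two_gset chi" unfolding gmap_def two_gset_def chi_def using inv by auto
  have gc1: "gmap G B two_gset c1" unfolding gmap_def two_gset_def c1_def by auto
  have "is_equalizer G B two_gset chi c1 A e"
    unfolding is_equalizer_def using e inj eA by (auto simp: chi_def c1_def)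
  then have "is_equalizer K (Fo B) (Fo two_gset) (Fm B two_gset chi) (Fm B two_gset c1) (Fo A) (Fm A B e)"
    using preserves_equalizer[OF B two A gchi gc1] by simp
  then show ?thesis unfolding is_equalizer_def by blast
qed

end

lemma bij_betw_image_Collect: "bij_betw f A B \<Longrightarrow> f ` {z \<in> A. Q (f z)} = {q \<in> B. Q q}"
  unfolding bij_betw_def by blast

locale exact_gset_functor_at = exact_gset_functor +
  fixes X :: "(nat \<times> 'a set, 'a) gset"
  assumes X: "is_gset G TG X" "transitive_gset G X"
begin

abbreviation XX where "XX \<equiv> diag_prod X X"
abbreviation xx_code where "xx_code \<equiv> std_code G XX"
abbreviation xx_decode where "xx_decode \<equiv> std_decode G XX"

definition XXs where "XXs = std_copy G XX"
definition pr1 where "pr1 z = fst (xx_decode z)"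
definition pr2 where "pr2 z = snd (xx_decode z)"

definition inv_rel where
  "inv_rel S \<longleftrightarrow> S \<subseteq> fst X \<times> fst X \<and> (\<forall>g\<in>carrier G. \<forall>p\<in>S. snd XX g p \<in> S)"

definition rel_gset where "rel_gset S = (S, snd XX)"
definition rel_obj where "rel_obj S = std_copy G (rel_gset S)"
definition rel_incl where "rel_incl S z = xx_code (std_decode G (rel_gset S) z)"

text \<open>An invariant relation \<open>S \<subseteq> X \<times> X\<close> is an object \<open>rel_obj S\<close> of \<open>S(G)\<close> with an injection
  \<open>rel_incl S\<close> into \<open>X \<times> X\<close>. Since \<open>Fo\<close> preserves products, \<open>Fo (X \<times> X)\<close> is identified
  with \<open>Fo X \<times> Fo X\<close> by \<open>pair_map\<close>, and \<open>lift_rel S\<close> is the resulting image of \<open>Fo S\<close>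
  in \<open>Fo X \<times> Fo X\<close>; \<open>lift_param S\<close> parametrizes it by \<open>Fo S\<close>.\<close>

definition pair_map where "pair_map z = (Fm XXs X pr1 z, Fm XXs X pr2 z)"
definition lift_param where "lift_param S w = pair_map (Fm (rel_obj S) XXs (rel_incl S) w)"
definition lift_rel where "lift_rel S = lift_param S ` fst (Fo (rel_obj S))"

definition orb where "orb p = orbit G XX p"

lemma XX_gset: "is_gset G TG XX" using is_gset_diag_prod_self[OF pro X] .
lemma XX_fst: "fst XX = fst X \<times> fst X" by (simp add: diag_prod_fst)
lemma XX_act: "snd XX g (x, y) = (snd X g x, snd X g y)" by (simp add: diag_prod_act)
lemma smooth_XX: "smooth_action G TG XX" using is_gset_smooth[OF XX_gset] .

lemma XXs_gset: "is_gset G TG XXs" unfolding XXs_def by (rule is_gset_std_copy[OF grp XX_gset])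
lemma XXs_fst: "fst XXs = xx_code ` (fst X \<times> fst X)" unfolding XXs_def std_copy_fst XX_fst ..

lemma xx_decode_code: "p \<in> fst X \<times> fst X \<Longrightarrow> xx_decode (xx_code p) = p"
  using std_decode_code[OF grp XX_gset] XX_fst by simp

lemma xx_decode_mem: "z \<in> fst XXs \<Longrightarrow> xx_decode z \<in> fst X \<times> fst X"
  using XXs_fst xx_decode_code by auto

lemma xx_code_decode: "z \<in> fst XXs \<Longrightarrow> xx_code (xx_decode z) = z"
  using XXs_fst xx_decode_code by auto

lemma gmap_xx_code: "gmap G XX XXs xx_code"
  unfolding XXs_def by (rule gmap_std_code[OF grp XX_gset])

lemma gmap_pr1: "gmap G XXs X pr1"
  using gmap_comp[OF gmap_std_decode[OF grp XX_gset] gmap_diag_prod_fst]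
  unfolding XXs_def pr1_def[abs_def] by (simp add: o_def)

lemma gmap_pr2: "gmap G XXs X pr2"
  using gmap_comp[OF gmap_std_decode[OF grp XX_gset] gmap_diag_prod_snd]
  unfolding XXs_def pr2_def[abs_def] by (simp add: o_def)

lemma XXs_product: "is_product G X X XXs pr1 pr2"
  unfolding is_product_def
  using gmap_pr1 gmap_pr2 bij_betw_std_decode[OF grp XX_gset]
  by (simp add: pr1_def pr2_def XXs_def XX_fst)

lemma bij_pair_map: "bij_betw pair_map (fst (Fo XXs)) (fst (Fo X) \<times> fst (Fo X))"
  using preserves_product[OF X(1) X(1) XXs_gset XXs_product] unfolding is_product_def pair_map_def by blast

lemma inv_rel_subset: "inv_rel S \<Longrightarrow> S \<subseteq> fst X \<times> fst X"
  unfolding inv_rel_def by blast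

lemma inv_rel_act: "inv_rel S \<Longrightarrow> g \<in> carrier G \<Longrightarrow> p \<in> S \<Longrightarrow> snd XX g p \<in> S"
  unfolding inv_rel_def by blast

lemma inv_rel_full: "inv_rel (fst X \<times> fst X)"
  unfolding inv_rel_def using smooth_action_closed[OF is_gset_smooth[OF X(1)]] by (auto simp: XX_act)

lemma inv_rel_empty: "inv_rel {}"
  unfolding inv_rel_def by simp

lemma inv_rel_Union: "(\<And>A. A \<in> F \<Longrightarrow> inv_rel A) \<Longrightarrow> inv_rel (\<Union>F)"
  unfolding inv_rel_def by blast

lemma is_gset_rel_gset: "inv_rel S \<Longrightarrow> is_gset G TG (rel_gset S)"
  unfolding rel_gset_def using is_gset_restrict[OF XX_gset] XX_fst unfolding inv_rel_def by simp

lemma is_gset_rel_obj: "inv_rel S \<Longrightarrow> is_gset G TG (rel_obj S)"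
  unfolding rel_obj_def by (rule is_gset_std_copy[OF grp is_gset_rel_gset])

lemma rel_gset_fst: "fst (rel_gset S) = S"
  unfolding rel_gset_def by simp

lemma rel_obj_fst: "fst (rel_obj S) = std_code G (rel_gset S) ` S"
  unfolding rel_obj_def std_copy_fst by (simp add: rel_gset_def)

lemma rel_incl_code: "inv_rel S \<Longrightarrow> p \<in> S \<Longrightarrow> rel_incl S (std_code G (rel_gset S) p) = xx_code p"
  unfolding rel_incl_def using std_decode_code[OF grp is_gset_rel_gset] by (simp add: rel_gset_def)

lemma gmap_rel_incl:
  assumes S: "inv_rel S"
  shows "gmap G (rel_obj S) XXs (rel_incl S)"
proof -
  have "gmap G (rel_gset S) XX (\<lambda>p. p)"
    unfolding gmap_def rel_gset_def using inv_rel_subset[OF S] XX_fst by auto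
  from gmap_comp[OF gmap_comp[OF gmap_std_decode[OF grp is_gset_rel_gset[OF S]] this] gmap_xx_code]
  show ?thesis unfolding rel_obj_def rel_incl_def[abs_def] by (simp add: o_def)
qed

lemma inj_on_rel_incl:
  assumes S: "inv_rel S"
  shows "inj_on (rel_incl S) (fst (rel_obj S))"
proof (rule inj_onI)
  fix z w assume "z \<in> fst (rel_obj S)" "w \<in> fst (rel_obj S)" and eq: "rel_incl S z = rel_incl S w"
  then obtain p q where p: "p \<in> S" "z = std_code G (rel_gset S) p" and q: "q \<in> S" "w = std_code G (rel_gset S) q"
    unfolding rel_obj_fst by blast
  have "xx_code p = xx_code q" using eq p q rel_incl_code[OF S] by simp
  moreover have "p \<in> fst XX" "q \<in> fst XX" using p q inv_rel_subset[OF S] XX_fst by auto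
  ultimately show "z = w" using std_code_eq_iff[OF grp XX_gset] p q by simp
qed

lemma lift_param_eq:
  assumes S: "inv_rel S" and w: "w \<in> fst (Fo (rel_obj S))"
  shows "lift_param S w = (Fm (rel_obj S) X (pr1 \<circ> rel_incl S) w, Fm (rel_obj S) X (pr2 \<circ> rel_incl S) w)"
  unfolding lift_param_def pair_map_def
  using Fm_comp[OF is_gset_rel_obj[OF S] XXs_gset X(1) gmap_rel_incl[OF S] gmap_pr1 w]
    Fm_comp[OF is_gset_rel_obj[OF S] XXs_gset X(1) gmap_rel_incl[OF S] gmap_pr2 w] by simp

lemma lift_param_act:
  assumes S: "inv_rel S" and k: "k \<in> carrier K" and w: "w \<in> fst (Fo (rel_obj S))"
  shows "lift_param S (snd (Fo (rel_obj S)) k w) =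
    (snd (Fo X) k (fst (lift_param S w)), snd (Fo X) k (snd (lift_param S w)))"
proof -
  have gF: "gmap K (Fo (rel_obj S)) (Fo XXs) (Fm (rel_obj S) XXs (rel_incl S))"
    by (rule Fm_gmap[OF is_gset_rel_obj[OF S] XXs_gset gmap_rel_incl[OF S]])
  then have "Fm (rel_obj S) XXs (rel_incl S) (snd (Fo (rel_obj S)) k w) = snd (Fo XXs) k (Fm (rel_obj S) XXs (rel_incl S) w)"
    and "Fm (rel_obj S) XXs (rel_incl S) w \<in> fst (Fo XXs)"
    using k w unfolding gmap_def by blast+
  moreover have "gmap K (Fo XXs) (Fo X) (Fm XXs X pr1)" "gmap K (Fo XXs) (Fo X) (Fm XXs X pr2)"
    by (rule Fm_gmap[OF XXs_gset X(1) gmap_pr1], rule Fm_gmap[OF XXs_gset X(1) gmap_pr2])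
  ultimately show ?thesis unfolding lift_param_def pair_map_def using k unfolding gmap_def by simp
qed

lemma lift_rel_subset: "inv_rel S \<Longrightarrow> lift_rel S \<subseteq> fst (Fo X) \<times> fst (Fo X)"
  unfolding lift_rel_def lift_param_def
  using Fm_gmap[OF is_gset_rel_obj XXs_gset gmap_rel_incl] bij_pair_map
  unfolding gmap_def bij_betw_def by blast

lemma lift_rel_factor:
  assumes T: "is_gset G TG T" and u: "gmap G T X u" and v: "gmap G T X v" and S: "inv_rel S"
    and uv: "\<And>t. t \<in> fst T \<Longrightarrow> (u t, v t) \<in> S" and z: "z \<in> fst (Fo T)"
  shows "(Fm T X u z, Fm T X v z) \<in> lift_rel S"
proof -
  define m where "m = std_code G (rel_gset S) \<circ> (\<lambda>t. (u t, v t))"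
  have "gmap G T (rel_gset S) (\<lambda>t. (u t, v t))"
    unfolding gmap_def rel_gset_def using uv u v by (auto simp: gmap_def XX_act)
  then have gm: "gmap G T (rel_obj S) m"
    unfolding m_def rel_obj_def using gmap_comp gmap_std_code[OF grp is_gset_rel_gset[OF S]] by blast
  have w: "Fm T (rel_obj S) m z \<in> fst (Fo (rel_obj S))"
    using Fm_gmap[OF T is_gset_rel_obj[OF S] gm] z unfolding gmap_def by blast
  have dec: "xx_decode (rel_incl S (m t)) = (u t, v t)" if t: "t \<in> fst T" for t
  proof -
    have "(u t, v t) \<in> fst X \<times> fst X" using uv[OF t] inv_rel_subset[OF S] by blast
    then show ?thesis using rel_incl_code[OF S uv[OF t]] xx_decode_code[of "(u t, v t)"] unfolding m_def by simp
  qed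
  have "Fm T X u z = Fm T X (pr1 \<circ> rel_incl S \<circ> m) z"
    by (rule Fm_cong[OF T X(1) u gmap_comp[OF gm gmap_comp[OF gmap_rel_incl[OF S] gmap_pr1]] _ z])
      (simp add: dec pr1_def)
  moreover have "Fm T X v z = Fm T X (pr2 \<circ> rel_incl S \<circ> m) z"
    by (rule Fm_cong[OF T X(1) v gmap_comp[OF gm gmap_comp[OF gmap_rel_incl[OF S] gmap_pr2]] _ z])
      (simp add: dec pr2_def)
  moreover have "Fm T X (pr1 \<circ> rel_incl S \<circ> m) z = Fm (rel_obj S) X (pr1 \<circ> rel_incl S) (Fm T (rel_obj S) m z)"
    by (rule Fm_comp[OF T is_gset_rel_obj[OF S] X(1) gm gmap_comp[OF gmap_rel_incl[OF S] gmap_pr1] z])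
  moreover have "Fm T X (pr2 \<circ> rel_incl S \<circ> m) z = Fm (rel_obj S) X (pr2 \<circ> rel_incl S) (Fm T (rel_obj S) m z)"
    by (rule Fm_comp[OF T is_gset_rel_obj[OF S] X(1) gm gmap_comp[OF gmap_rel_incl[OF S] gmap_pr2] z])
  ultimately have "(Fm T X u z, Fm T X v z) = lift_param S (Fm T (rel_obj S) m z)"
    using lift_param_eq[OF S w] by simp
  then show ?thesis unfolding lift_rel_def using w by blast
qed

lemma lift_rel_full: "lift_rel (fst X \<times> fst X) = fst (Fo X) \<times> fst (Fo X)"
proof
  show "fst (Fo X) \<times> fst (Fo X) \<subseteq> lift_rel (fst X \<times> fst X)"
  proof
    fix q assume "q \<in> fst (Fo X) \<times> fst (Fo X)"
    then obtain z where z: "z \<in> fst (Fo XXs)" "q = pair_map z" using bij_pair_map unfolding bij_betw_def by blast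
    have "(Fm XXs X pr1 z, Fm XXs X pr2 z) \<in> lift_rel (fst X \<times> fst X)"
      by (rule lift_rel_factor[OF XXs_gset gmap_pr1 gmap_pr2 inv_rel_full _ z(1)])
        (use xx_decode_mem in \<open>auto simp: pr1_def pr2_def\<close>)
    then show "q \<in> lift_rel (fst X \<times> fst X)" using z(2) unfolding pair_map_def by simp
  qed
qed (rule lift_rel_subset[OF inv_rel_full])

lemma lift_rel_mono:
  assumes A: "inv_rel A" and B: "inv_rel B" and AB: "A \<subseteq> B"
  shows "lift_rel A \<subseteq> lift_rel B"
proof
  fix y assume "y \<in> lift_rel A"
  then obtain w where w: "w \<in> fst (Fo (rel_obj A))" "y = lift_param A w" unfolding lift_rel_def by blast
  have "(Fm (rel_obj A) X (pr1 \<circ> rel_incl A) w, Fm (rel_obj A) X (pr2 \<circ> rel_incl A) w) \<in> lift_rel B"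
  proof (rule lift_rel_factor[OF is_gset_rel_obj[OF A] gmap_comp[OF gmap_rel_incl[OF A] gmap_pr1]
        gmap_comp[OF gmap_rel_incl[OF A] gmap_pr2] B _ w(1)])
    fix t assume "t \<in> fst (rel_obj A)"
    then obtain p where p: "p \<in> A" "t = std_code G (rel_gset A) p" unfolding rel_obj_fst by blast
    then have "p \<in> fst X \<times> fst X" using inv_rel_subset[OF A] by blast
    then have "xx_decode (rel_incl A t) = p" using rel_incl_code[OF A p(1)] xx_decode_code p(2) by simp
    then show "((pr1 \<circ> rel_incl A) t, (pr2 \<circ> rel_incl A) t) \<in> B" using p(1) AB by (auto simp: pr1_def pr2_def)
  qed
  then show "y \<in> lift_rel B" using w lift_param_eq[OF A] by simp
qed

lemma lift_rel_empty: "lift_rel {} = {}"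
proof -
  have "fst (Fo (rel_obj {})) = {}"
    using preserves_initial[OF is_gset_rel_obj[OF inv_rel_empty]] by (simp add: rel_obj_fst)
  then show ?thesis unfolding lift_rel_def by simp
qed

definition rel_sub_incl where
  "rel_sub_incl D C = std_code G (rel_gset C) \<circ> std_decode G (rel_gset D)"

lemma rel_sub_incl_code:
  "inv_rel D \<Longrightarrow> p \<in> D \<Longrightarrow> rel_sub_incl D C (std_code G (rel_gset D) p) = std_code G (rel_gset C) p"
  unfolding rel_sub_incl_def using std_decode_code[OF grp is_gset_rel_gset] by (simp add: rel_gset_def)

context
  fixes C D assumes C: "inv_rel C" and D: "inv_rel D" and DC: "D \<subseteq> C"
begin

lemma gmap_rel_sub_incl: "gmap G (rel_obj D) (rel_obj C) (rel_sub_incl D C)"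
proof -
  have "gmap G (rel_gset D) (rel_gset C) (\<lambda>p. p)" unfolding gmap_def rel_gset_def using DC by auto
  from gmap_comp[OF gmap_comp[OF gmap_std_decode[OF grp is_gset_rel_gset[OF D]] this]
      gmap_std_code[OF grp is_gset_rel_gset[OF C]]]
  show ?thesis unfolding rel_obj_def rel_sub_incl_def by (simp add: o_def)
qed

lemma rel_sub_incl_image: "rel_sub_incl D C ` fst (rel_obj D) = std_code G (rel_gset C) ` D"
  unfolding rel_obj_fst using rel_sub_incl_code[OF D] by (auto simp: image_image)

lemma inj_on_rel_sub_incl: "inj_on (rel_sub_incl D C) (fst (rel_obj D))"
proof (rule inj_onI)
  fix z w assume "z \<in> fst (rel_obj D)" "w \<in> fst (rel_obj D)" and eq: "rel_sub_incl D C z = rel_sub_incl D C w"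
  then obtain p q where p: "p \<in> D" "z = std_code G (rel_gset D) p" and q: "q \<in> D" "w = std_code G (rel_gset D) q"
    unfolding rel_obj_fst by blast
  have "std_code G (rel_gset C) p = std_code G (rel_gset C) q" using eq p q rel_sub_incl_code[OF D] by simp
  moreover have "p \<in> C" "q \<in> C" using p(1) q(1) DC by blast+
  ultimately have "p = q" using std_code_eq_iff[OF grp is_gset_rel_gset[OF C], of p q] by (simp add: rel_gset_fst)
  then show "z = w" using p q by simp
qed

lemma lift_param_rel_sub_incl:
  assumes w: "w \<in> fst (Fo (rel_obj D))"
  shows "lift_param C (Fm (rel_obj D) (rel_obj C) (rel_sub_incl D C) w) = lift_param D w"
proof -
  have "Fm (rel_obj C) XXs (rel_incl C) (Fm (rel_obj D) (rel_obj C) (rel_sub_incl D C) w) =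
      Fm (rel_obj D) XXs (rel_incl C \<circ> rel_sub_incl D C) w"
    using Fm_comp[OF is_gset_rel_obj[OF D] is_gset_rel_obj[OF C] XXs_gset gmap_rel_sub_incl gmap_rel_incl[OF C] w]
    by simp
  also have "\<dots> = Fm (rel_obj D) XXs (rel_incl D) w"
  proof (rule Fm_cong[OF is_gset_rel_obj[OF D] XXs_gset gmap_comp[OF gmap_rel_sub_incl gmap_rel_incl[OF C]]
        gmap_rel_incl[OF D] _ w])
    fix t assume "t \<in> fst (rel_obj D)"
    then obtain p where p: "p \<in> D" "t = std_code G (rel_gset D) p" unfolding rel_obj_fst by blast
    moreover have "p \<in> C" using p(1) DC by blast
    ultimately show "(rel_incl C \<circ> rel_sub_incl D C) t = rel_incl D t"
      using rel_sub_incl_code[OF D p(1)] rel_incl_code[OF C] rel_incl_code[OF D p(1)] by simp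
  qed
  finally show ?thesis unfolding lift_param_def by simp
qed

end

lemma inj_on_lift_param:
  assumes S: "inv_rel S"
  shows "inj_on (lift_param S) (fst (Fo (rel_obj S)))"
proof -
  have "inj_on (Fm (rel_obj S) XXs (rel_incl S)) (fst (Fo (rel_obj S)))"
    by (rule preserves_inj[OF is_gset_rel_obj[OF S] XXs_gset gmap_rel_incl[OF S] inj_on_rel_incl[OF S]])
  moreover have "Fm (rel_obj S) XXs (rel_incl S) ` fst (Fo (rel_obj S)) \<subseteq> fst (Fo XXs)"
    using Fm_gmap[OF is_gset_rel_obj[OF S] XXs_gset gmap_rel_incl[OF S]] unfolding gmap_def by blast
  ultimately have "inj_on (pair_map \<circ> Fm (rel_obj S) XXs (rel_incl S)) (fst (Fo (rel_obj S)))"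
    using bij_pair_map unfolding bij_betw_def by (blast intro: comp_inj_on inj_on_subset)
  then show ?thesis unfolding lift_param_def[abs_def] by (simp add: o_def)
qed

text \<open>Exactness enters through coproducts: \<open>Fo\<close> of a disjoint union of invariant relations is the
  disjoint union of their images.\<close>

lemma lift_rel_Un_disjoint:
  assumes A: "inv_rel A" and B: "inv_rel B" and AB: "A \<inter> B = {}"
  shows "lift_rel (A \<union> B) = lift_rel A \<union> lift_rel B" and "lift_rel A \<inter> lift_rel B = {}"
proof -
  define C where "C = A \<union> B"
  have C: "inv_rel C" using A B unfolding C_def inv_rel_def by blast
  have AC: "A \<subseteq> C" and BC: "B \<subseteq> C" unfolding C_def by blast+
  let ?i1 = "rel_sub_incl A C" and ?i2 = "rel_sub_incl B C"
  have "std_code G (rel_gset C) ` A \<inter> std_code G (rel_gset C) ` B = std_code G (rel_gset C) ` (A \<inter> B)"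
    using inj_on_image_Int[OF inj_on_std_code[OF grp is_gset_rel_gset[OF C], unfolded rel_gset_fst] AC BC] ..
  then have "std_code G (rel_gset C) ` A \<inter> std_code G (rel_gset C) ` B = {}" using AB by simp
  then have "is_coproduct G (rel_obj A) (rel_obj B) (rel_obj C) ?i1 ?i2"
    unfolding is_coproduct_def
    using gmap_rel_sub_incl[OF C A AC] gmap_rel_sub_incl[OF C B BC]
      inj_on_rel_sub_incl[OF C A AC] inj_on_rel_sub_incl[OF C B BC]
      rel_sub_incl_image[OF C A AC] rel_sub_incl_image[OF C B BC]
    by (simp add: rel_obj_fst C_def image_Un)
  then have cop: "is_coproduct K (Fo (rel_obj A)) (Fo (rel_obj B)) (Fo (rel_obj C))
      (Fm (rel_obj A) (rel_obj C) ?i1) (Fm (rel_obj B) (rel_obj C) ?i2)"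
    by (rule preserves_coproduct[OF is_gset_rel_obj[OF A] is_gset_rel_obj[OF B] is_gset_rel_obj[OF C]])
  let ?F1 = "Fm (rel_obj A) (rel_obj C) ?i1 ` fst (Fo (rel_obj A))"
    and ?F2 = "Fm (rel_obj B) (rel_obj C) ?i2 ` fst (Fo (rel_obj B))"
  have FC: "fst (Fo (rel_obj C)) = ?F1 \<union> ?F2" and disj: "?F1 \<inter> ?F2 = {}"
    using cop unfolding is_coproduct_def by blast+
  have hA: "lift_rel A = lift_param C ` ?F1" and hB: "lift_rel B = lift_param C ` ?F2"
    unfolding lift_rel_def image_image
    using lift_param_rel_sub_incl[OF C A AC] lift_param_rel_sub_incl[OF C B BC] by (auto intro!: image_cong)
  have "lift_rel (A \<union> B) = lift_param C ` (?F1 \<union> ?F2)"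
    unfolding C_def[symmetric] lift_rel_def FC ..
  then show "lift_rel (A \<union> B) = lift_rel A \<union> lift_rel B"
    unfolding hA hB by (simp add: image_Un)
  show "lift_rel A \<inter> lift_rel B = {}"
    unfolding hA hB using inj_on_image_Int[OF inj_on_lift_param[OF C], of ?F1 ?F2] FC disj by simp
qed

lemma lift_rel_kernel:
  assumes Y: "is_gset G TG Y" and f: "gmap G X Y f"
  shows "lift_rel {p \<in> fst X \<times> fst X. f (fst p) = f (snd p)} =
         {q \<in> fst (Fo X) \<times> fst (Fo X). Fm X Y f (fst q) = Fm X Y f (snd q)}"
proof -
  define Kn where "Kn = {p \<in> fst X \<times> fst X. f (fst p) = f (snd p)}"
  have Kn: "inv_rel Kn"
    unfolding inv_rel_def Kn_def
    using f smooth_action_closed[OF is_gset_smooth[OF X(1)]] unfolding gmap_def by (auto simp: XX_act)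
  have g1: "gmap G XXs Y (f \<circ> pr1)" and g2: "gmap G XXs Y (f \<circ> pr2)"
    by (rule gmap_comp[OF gmap_pr1 f], rule gmap_comp[OF gmap_pr2 f])
  have "rel_incl Kn ` fst (rel_obj Kn) = xx_code ` Kn"
    unfolding rel_obj_fst using rel_incl_code[OF Kn] by (auto simp: image_image)
  also have "\<dots> = {z \<in> fst XXs. (f \<circ> pr1) z = (f \<circ> pr2) z}"
  proof (intro equalityI subsetI)
    fix z assume "z \<in> xx_code ` Kn"
    then obtain p where p: "p \<in> fst X \<times> fst X" "f (fst p) = f (snd p)" "z = xx_code p"
      unfolding Kn_def by blast
    then show "z \<in> {z \<in> fst XXs. (f \<circ> pr1) z = (f \<circ> pr2) z}"
      using xx_decode_code[OF p(1)] XXs_fst by (simp add: pr1_def pr2_def)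
  next
    fix z assume "z \<in> {z \<in> fst XXs. (f \<circ> pr1) z = (f \<circ> pr2) z}"
    then have "xx_decode z \<in> Kn" and "z = xx_code (xx_decode z)"
      using xx_decode_mem xx_code_decode unfolding Kn_def by (simp_all add: pr1_def pr2_def)
    then show "z \<in> xx_code ` Kn" by blast
  qed
  finally have "is_equalizer G XXs Y (f \<circ> pr1) (f \<circ> pr2) (rel_obj Kn) (rel_incl Kn)"
    unfolding is_equalizer_def using gmap_rel_incl[OF Kn] inj_on_rel_incl[OF Kn] by blast
  then have "Fm (rel_obj Kn) XXs (rel_incl Kn) ` fst (Fo (rel_obj Kn)) =
      {z \<in> fst (Fo XXs). Fm XXs Y (f \<circ> pr1) z = Fm XXs Y (f \<circ> pr2) z}"
    using preserves_equalizer[OF XXs_gset Y is_gset_rel_obj[OF Kn] g1 g2] unfolding is_equalizer_def by blast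
  also have "\<dots> = {z \<in> fst (Fo XXs). Fm X Y f (fst (pair_map z)) = Fm X Y f (snd (pair_map z))}"
    unfolding pair_map_def using Fm_comp[OF XXs_gset X(1) Y gmap_pr1 f] Fm_comp[OF XXs_gset X(1) Y gmap_pr2 f]
    by auto
  finally have "lift_rel Kn = pair_map ` {z \<in> fst (Fo XXs). Fm X Y f (fst (pair_map z)) = Fm X Y f (snd (pair_map z))}"
    unfolding lift_rel_def lift_param_def by (simp add: image_image[symmetric])
  also have "\<dots> = {q \<in> fst (Fo X) \<times> fst (Fo X). Fm X Y f (fst q) = Fm X Y f (snd q)}"
    by (rule bij_betw_image_Collect[OF bij_pair_map])
  finally show ?thesis unfolding Kn_def .
qed

lemma lift_rel_diagonal:
  "lift_rel {p \<in> fst X \<times> fst X. fst p = snd p} = {q \<in> fst (Fo X) \<times> fst (Fo X). fst q = snd q}"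
proof -
  have "gmap G X X id" unfolding gmap_def using smooth_action_closed[OF is_gset_smooth[OF X(1)]] by auto
  from lift_rel_kernel[OF X(1) this] show ?thesis using Fm_id[OF X(1)] by auto
qed

lemma orb_subset: "p \<in> fst X \<times> fst X \<Longrightarrow> orb p \<subseteq> fst X \<times> fst X"
  unfolding orb_def using orbit_subset[OF smooth_XX, of p] XX_fst by simp

lemma orb_self: "p \<in> fst X \<times> fst X \<Longrightarrow> p \<in> orb p"
  unfolding orb_def using orbit_self[OF grp smooth_XX, of p] XX_fst by simp

lemma orb_eq: "p \<in> fst X \<times> fst X \<Longrightarrow> q \<in> orb p \<Longrightarrow> orb q = orb p"
  unfolding orb_def using orbit_eq_of_mem[OF grp smooth_XX, of p q] XX_fst by simp

lemma orb_act: "g \<in> carrier G \<Longrightarrow> p \<in> fst X \<times> fst X \<Longrightarrow> orb (snd XX g p) = orb p"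
  unfolding orb_def using orbit_act_eq[OF grp smooth_XX, of g p] XX_fst by simp

lemma inv_rel_orb:
  assumes p: "p \<in> fst X \<times> fst X"
  shows "inv_rel (orb p)"
  unfolding inv_rel_def
proof (intro conjI ballI)
  show "orb p \<subseteq> fst X \<times> fst X" by (rule orb_subset[OF p])
  fix g q assume g: "g \<in> carrier G" and q: "q \<in> orb p"
  have "snd XX g q \<in> orb q" unfolding orb_def by (rule orbit_memI[OF g])
  then show "snd XX g q \<in> orb p" using orb_eq[OF p q] by simp
qed

lemma orb_subset_inv_rel:
  assumes S: "inv_rel S" and p: "p \<in> S"
  shows "orb p \<subseteq> S"
proof
  fix q assume "q \<in> orb p"
  then obtain g where "g \<in> carrier G" "q = snd XX g p" unfolding orb_def by (rule orbitE)
  then show "q \<in> S" using inv_rel_act[OF S _ p] by simp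
qed

lemma orb_disjoint:
  assumes p: "p \<in> fst X \<times> fst X" and q: "q \<in> fst X \<times> fst X" and ne: "orb p \<noteq> orb q"
  shows "orb p \<inter> orb q = {}"
proof (rule ccontr)
  assume "orb p \<inter> orb q \<noteq> {}"
  then obtain r where r: "r \<in> orb p" "r \<in> orb q" by blast
  show False using orb_eq[OF p r(1)] orb_eq[OF q r(2)] ne by simp
qed

lemma finite_orbs: "finite (orb ` (fst X \<times> fst X))"
  using is_gset_finite_orbits[OF XX_gset] XX_fst unfolding orb_def by simp

lemma inv_rel_if_invariant:
  assumes eq: "equiv (fst X) R" and inv: "invariant_rel G X R"
  shows "inv_rel R"
  unfolding inv_rel_def
proof (intro conjI ballI)
  show "R \<subseteq> fst X \<times> fst X" using eq unfolding equiv_def refl_on_def by blast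
next
  fix g p assume g: "g \<in> carrier G" and p: "p \<in> R"
  obtain x x' where p': "p = (x, x')" by (cases p)
  have "(snd X g x, snd X g x') \<in> R" using inv g p p' unfolding invariant_rel_def by blast
  then show "snd XX g p \<in> R" using p' by (simp add: XX_act)
qed

lemma lift_rel_Union_orbs:
  assumes "finite F" "F \<subseteq> orb ` (fst X \<times> fst X)"
  shows "lift_rel (\<Union>F) \<subseteq> \<Union>(lift_rel ` F)"
  using assms
proof (induction F rule: finite_induct)
  case empty
  then show ?case using lift_rel_empty by simp
next
  case (insert Ob F)
  obtain p where p: "p \<in> fst X \<times> fst X" "Ob = orb p" using insert.prems by blast
  have F: "F \<subseteq> orb ` (fst X \<times> fst X)" using insert.prems by blast
  have "inv_rel (\<Union>F)" using F inv_rel_orb by (intro inv_rel_Union) blast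
  moreover have "Ob \<inter> B = {}" if B: "B \<in> F" for B
  proof -
    obtain p' where p': "p' \<in> fst X \<times> fst X" "B = orb p'" using B F by blast
    have "Ob \<noteq> B" using insert.hyps(2) B by blast
    then show ?thesis using orb_disjoint[OF p(1) p'(1)] p(2) p'(2) by simp
  qed
  then have "Ob \<inter> \<Union>F = {}" by blast
  ultimately have "lift_rel (Ob \<union> \<Union>F) = lift_rel Ob \<union> lift_rel (\<Union>F)"
    using lift_rel_Un_disjoint(1) inv_rel_orb[OF p(1)] p(2) by simp
  then show ?case using insert.IH[OF F] by auto
qed

lemma lift_rel_orb_exists:
  assumes q: "q \<in> fst (Fo X) \<times> fst (Fo X)"
  obtains p where "p \<in> fst X \<times> fst X" "q \<in> lift_rel (orb p)"
proof -
  let ?F = "orb ` (fst X \<times> fst X)"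
  have "fst X \<times> fst X = \<Union>?F"
  proof
    show "fst X \<times> fst X \<subseteq> \<Union>?F" using orb_self by blast
    show "\<Union>?F \<subseteq> fst X \<times> fst X" using orb_subset by blast
  qed
  then have "lift_rel (fst X \<times> fst X) \<subseteq> \<Union>(lift_rel ` ?F)"
    using lift_rel_Union_orbs[OF finite_orbs order_refl] by simp
  then have "q \<in> \<Union>(lift_rel ` ?F)" using q lift_rel_full by blast
  then obtain p where "p \<in> fst X \<times> fst X" "q \<in> lift_rel (orb p)" by blast
  then show ?thesis by (rule that)
qed

text \<open>Distinct orbits have disjoint lifts, so the lift of an invariant relation is the
  union of the lifts of the orbits it contains.\<close>

lemma lift_rel_orb_mem_iff:
  assumes S: "inv_rel S" and p: "p \<in> fst X \<times> fst X" and q: "q \<in> lift_rel (orb p)"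
  shows "q \<in> lift_rel S \<longleftrightarrow> p \<in> S"
proof
  assume "p \<in> S"
  then show "q \<in> lift_rel S" using lift_rel_mono[OF inv_rel_orb[OF p] S orb_subset_inv_rel[OF S]] q by blast
next
  assume qS: "q \<in> lift_rel S"
  show "p \<in> S"
  proof (rule ccontr)
    assume "p \<notin> S"
    have "orb p \<inter> S = {}"
    proof (rule ccontr)
      assume "orb p \<inter> S \<noteq> {}"
      then obtain r where r: "r \<in> orb p" "r \<in> S" by blast
      have "p \<in> orb r" using orb_self[OF p] orb_eq[OF p r(1)] by simp
      then show False using orb_subset_inv_rel[OF S r(2)] \<open>p \<notin> S\<close> by blast
    qed
    then have "lift_rel (orb p) \<inter> lift_rel S = {}" by (rule lift_rel_Un_disjoint(2)[OF inv_rel_orb[OF p] S])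
    then show False using q qS by blast
  qed
qed

lemma transitive_rel_obj_orb:
  assumes p: "p \<in> fst X \<times> fst X"
  shows "transitive_gset G (rel_obj (orb p))"
proof -
  have "rel_gset (orb p) = (orbit G XX p, snd XX)" unfolding rel_gset_def orb_def ..
  moreover have "p \<in> fst XX" using p XX_fst by simp
  ultimately have "transitive_gset G (rel_gset (orb p))" using is_gset_orbit(2)[OF grp smooth_XX] by simp
  then show ?thesis unfolding rel_obj_def by (rule transitive_std_copy[OF grp is_gset_rel_gset[OF inv_rel_orb[OF p]]])
qed

lemma lift_rel_factor_orb:
  assumes T: "is_gset G TG T" "transitive_gset G T" and u: "gmap G T X u" and v: "gmap G T X v"
    and t0: "t0 \<in> fst T" and z: "z \<in> fst (Fo T)"
  shows "(Fm T X u z, Fm T X v z) \<in> lift_rel (orb (u t0, v t0))"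
proof (rule lift_rel_factor[OF T(1) u v _ _ z])
  show "inv_rel (orb (u t0, v t0))" using u v t0 unfolding gmap_def by (intro inv_rel_orb) blast
next
  fix t assume "t \<in> fst T"
  then obtain g where g: "g \<in> carrier G" "snd T g t0 = t" using transitive_gsetE[OF T(2) t0] by blast
  then have "(u t, v t) = snd XX g (u t0, v t0)" using u v t0 unfolding gmap_def by (auto simp: XX_act)
  then show "(u t, v t) \<in> orb (u t0, v t0)" unfolding orb_def using orbit_memI[OF g(1)] by simp
qed

lemma lift_rel_orb_diag:
  assumes x: "x \<in> fst X" and a: "a \<in> fst (Fo X)"
  shows "(a, a) \<in> lift_rel (orb (x, x))"
proof -
  have "orb (x, x) = {p \<in> fst X \<times> fst X. fst p = snd p}"
  proof (intro equalityI subsetI)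
    fix p assume "p \<in> orb (x, x)"
    then obtain g where g: "g \<in> carrier G" "p = snd XX g (x, x)" unfolding orb_def by (rule orbitE)
    then have "p = (snd X g x, snd X g x)" by (simp add: XX_act)
    then show "p \<in> {p \<in> fst X \<times> fst X. fst p = snd p}"
      using smooth_action_closed[OF is_gset_smooth[OF X(1)] g(1) x] by simp
  next
    fix p assume p: "p \<in> {p \<in> fst X \<times> fst X. fst p = snd p}"
    then have "fst p \<in> fst X" and p2: "snd p = fst p" by (simp_all add: mem_Times_iff)
    then obtain g where g: "g \<in> carrier G" "snd X g x = fst p"
      using transitive_gsetE[OF X(2) x] by blast
    then have "p = snd XX g (x, x)" using p2 by (simp add: XX_act prod_eq_iff)
    then show "p \<in> orb (x, x)" unfolding orb_def using orbit_memI[OF g(1)] by simp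
  qed
  then show ?thesis using lift_rel_diagonal a by simp
qed

lemma lift_rel_orb_swap:
  assumes p: "(x, x') \<in> fst X \<times> fst X" and aa: "(a, a') \<in> lift_rel (orb (x, x'))"
  shows "(a', a) \<in> lift_rel (orb (x', x))"
proof -
  let ?O = "orb (x, x')"
  have O: "inv_rel ?O" by (rule inv_rel_orb[OF p])
  obtain w where w: "w \<in> fst (Fo (rel_obj ?O))" "(a, a') = lift_param ?O w"
    using aa unfolding lift_rel_def by blast
  then have a: "a = Fm (rel_obj ?O) X (pr1 \<circ> rel_incl ?O) w" "a' = Fm (rel_obj ?O) X (pr2 \<circ> rel_incl ?O) w"
    using lift_param_eq[OF O w(1)] by simp_all
  define t0 where "t0 = std_code G (rel_gset ?O) (x, x')"
  have t0: "t0 \<in> fst (rel_obj ?O)" unfolding t0_def rel_obj_fst by (rule imageI[OF orb_self[OF p]])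
  have "xx_decode (rel_incl ?O t0) = (x, x')"
    unfolding t0_def using rel_incl_code[OF O orb_self[OF p]] xx_decode_code[OF p] by simp
  then have u: "(pr2 \<circ> rel_incl ?O) t0 = x'" "(pr1 \<circ> rel_incl ?O) t0 = x" by (simp_all add: pr1_def pr2_def)
  show ?thesis
    using lift_rel_factor_orb[OF is_gset_rel_obj[OF O] transitive_rel_obj_orb[OF p]
        gmap_comp[OF gmap_rel_incl[OF O] gmap_pr2] gmap_comp[OF gmap_rel_incl[OF O] gmap_pr1] t0 w(1), unfolded u]
    unfolding a .
qed

text \<open>The three pairs come from one element of \<open>Fo\<close> of the orbit of \<open>(x, x', x'')\<close> in
  \<open>X \<times> X \<times> X\<close>; this needs \<open>Fo\<close> of a transitive G-set to be nonempty.\<close>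

lemma lift_rel_orb_compose:
  assumes nonempty: "\<And>A. is_gset G TG A \<Longrightarrow> transitive_gset G A \<Longrightarrow> fst (Fo A) \<noteq> {}"
    and x: "x \<in> fst X" "x' \<in> fst X" "x'' \<in> fst X"
  obtains a a' a'' where "(a, a') \<in> lift_rel (orb (x, x'))" "(a', a'') \<in> lift_rel (orb (x', x''))"
    "(a, a'') \<in> lift_rel (orb (x, x''))"
proof -
  define X3 where "X3 = diag_prod X XX"
  have X3: "smooth_action G TG X3"
    unfolding X3_def by (rule smooth_action_diag_prod[OF is_gset_smooth[OF X(1)] smooth_XX])
  have p0: "(x, x', x'') \<in> fst X3" unfolding X3_def using x by (simp add: diag_prod_fst XX_fst)
  define O3 where "O3 = (orbit G X3 (x, x', x''), snd X3)"
  have O3: "is_gset G TG O3" "transitive_gset G O3" unfolding O3_def by (rule is_gset_orbit[OF grp X3 p0])+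
  have O3_sub: "fst O3 \<subseteq> fst X3" unfolding O3_def using orbit_subset[OF X3 p0] by simp
  have O3_eq: "O3 = (fst O3, snd (diag_prod X XX))" unfolding O3_def X3_def by simp
  have gp: "gmap G O3 X fst" "gmap G O3 X (fst \<circ> snd)" "gmap G O3 X (snd \<circ> snd)"
    by (subst O3_eq, rule gmap_restrict[OF gmap_diag_prod_fst O3_sub[unfolded X3_def]],
        subst O3_eq, rule gmap_restrict[OF gmap_comp[OF gmap_diag_prod_snd gmap_diag_prod_fst] O3_sub[unfolded X3_def]],
        subst O3_eq, rule gmap_restrict[OF gmap_comp[OF gmap_diag_prod_snd gmap_diag_prod_snd] O3_sub[unfolded X3_def]])
  define T where "T = std_copy G O3"
  have T: "is_gset G TG T" "transitive_gset G T"
    unfolding T_def by (rule is_gset_std_copy[OF grp O3(1)], rule transitive_std_copy[OF grp O3])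
  have p0O: "(x, x', x'') \<in> fst O3" unfolding O3_def using orbit_self[OF grp X3 p0] by simp
  define t0 where "t0 = std_code G O3 (x, x', x'')"
  have t0: "t0 \<in> fst T" unfolding T_def t0_def std_copy_fst by (rule imageI[OF p0O])
  have dec: "std_decode G O3 t0 = (x, x', x'')" unfolding t0_def by (rule std_decode_code[OF grp O3(1) p0O])
  obtain z where z: "z \<in> fst (Fo T)" using nonempty[OF T] by blast
  have gu: "gmap G T X (f \<circ> std_decode G O3)" if "gmap G O3 X f" for f
    unfolding T_def by (rule gmap_comp[OF gmap_std_decode[OF grp O3(1)] that])
  have u: "(fst \<circ> std_decode G O3) t0 = x" "((fst \<circ> snd) \<circ> std_decode G O3) t0 = x'"
    "((snd \<circ> snd) \<circ> std_decode G O3) t0 = x''" using dec by simp_all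
  show ?thesis
    by (rule that[OF lift_rel_factor_orb[OF T gu[OF gp(1)] gu[OF gp(2)] t0 z, unfolded u]
          lift_rel_factor_orb[OF T gu[OF gp(2)] gu[OF gp(3)] t0 z, unfolded u]
          lift_rel_factor_orb[OF T gu[OF gp(1)] gu[OF gp(3)] t0 z, unfolded u]])
qed

end

section \<open>Quotients of a product of images\<close>

locale product_quotient_setting =
  fixes G :: "'g monoid" and TG :: "'g topology"
    and H :: "'h monoid" and TH :: "'h topology"
    and K :: "'k monoid" and TK :: "'k topology"
    and PhiO :: "(nat \<times> 'g set, 'g) gset \<Rightarrow> (nat \<times> 'k set, 'k) gset"
    and PhiM :: "(nat \<times> 'g set, 'g) gset \<Rightarrow> (nat \<times> 'g set, 'g) gset
                  \<Rightarrow> (nat \<times> 'g set \<Rightarrow> nat \<times> 'g set) \<Rightarrow> (nat \<times> 'k set \<Rightarrow> nat \<times> 'k set)"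
    and PsiO :: "(nat \<times> 'h set, 'h) gset \<Rightarrow> (nat \<times> 'k set, 'k) gset"
    and PsiM :: "(nat \<times> 'h set, 'h) gset \<Rightarrow> (nat \<times> 'h set, 'h) gset
                  \<Rightarrow> (nat \<times> 'h set \<Rightarrow> nat \<times> 'h set) \<Rightarrow> (nat \<times> 'k set \<Rightarrow> nat \<times> 'k set)"
    and X :: "(nat \<times> 'g set, 'g) gset" and Y :: "(nat \<times> 'h set, 'h) gset"
    and Z :: "('z, 'k) gset" and q :: "(nat \<times> 'k set) \<times> (nat \<times> 'k set) \<Rightarrow> 'z"
  assumes proG: "pro_oligomorphic G TG" and proH: "pro_oligomorphic H TH"
    and split: "split_wrt G TG TYPE('h)"
    and exPhi: "exact_functor G TG K TK PhiO PhiM" and exPsi: "exact_functor H TH K TK PsiO PsiM"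
    and transitive_prod: "\<And>X' Y'. is_gset G TG X' \<Longrightarrow> transitive_gset G X' \<Longrightarrow>
      is_gset H TH Y' \<Longrightarrow> transitive_gset H Y' \<Longrightarrow> transitive_gset K (diag_prod (PhiO X') (PsiO Y'))"
    and X: "is_gset G TG X" "transitive_gset G X" and Y: "is_gset H TH Y" "transitive_gset H Y"
    and q: "gmap K (diag_prod (PhiO X) (PsiO Y)) Z q" "q ` fst (diag_prod (PhiO X) (PsiO Y)) = fst Z"

sublocale product_quotient_setting \<subseteq> A: exact_gset_functor_at G TG K TK PhiO PhiM X
  using proG exPhi X by unfold_locales

sublocale product_quotient_setting \<subseteq> B: exact_gset_functor_at H TH K TK PsiO PsiM Y
  using proH exPsi Y by unfold_locales

context product_quotient_setting
begin

abbreviation W where "W \<equiv> diag_prod (PhiO X) (PsiO Y)"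

lemma Phi_nonempty:
  assumes "is_gset G TG X'" "transitive_gset G X'"
  shows "fst (PhiO X') \<noteq> {}"
proof -
  have "fst (diag_prod (PhiO X') (PsiO Y)) \<noteq> {}"
    using transitive_prod[OF assms Y] unfolding transitive_gset_def by blast
  then show ?thesis by (simp add: diag_prod_fst)
qed

lemma Psi_nonempty:
  assumes "is_gset H TH Y'" "transitive_gset H Y'"
  shows "fst (PsiO Y') \<noteq> {}"
proof -
  have "fst (diag_prod (PhiO X) (PsiO Y')) \<noteq> {}"
    using transitive_prod[OF X assms] unfolding transitive_gset_def by blast
  then show ?thesis by (simp add: diag_prod_fst)
qed

lemma smooth_W: "smooth_action K TK W"
  by (rule smooth_action_diag_prod[OF is_gset_smooth[OF A.Fo_gset[OF X(1)]] is_gset_smooth[OF B.Fo_gset[OF Y(1)]]])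

lemma q_act:
  assumes "k \<in> carrier K" "a \<in> fst (PhiO X)" "b \<in> fst (PsiO Y)"
  shows "q (snd (PhiO X) k a, snd (PsiO Y) k b) = snd Z k (q (a, b))"
  using q(1) assms unfolding gmap_def by (simp add: diag_prod_fst diag_prod_act)

text \<open>Whether \<open>q\<close> identifies \<open>(a, b)\<close> and \<open>(a', b')\<close> depends only on the orbits of
  \<open>(x, x')\<close> and \<open>(y, y')\<close> whose lifts contain \<open>(a, a')\<close> and \<open>(b, b')\<close>: the lifts are
  parametrized equivariantly by \<open>PhiO\<close> and \<open>PsiO\<close> of a transitive G-set and H-set, and the
  product of these is a transitive K-set by hypothesis.\<close>

lemma q_eq_on_lifted_orbs:
  assumes px: "px \<in> fst X \<times> fst X" and py: "py \<in> fst Y \<times> fst Y"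
    and a: "(a, a') \<in> A.lift_rel (A.orb px)" "(c, c') \<in> A.lift_rel (A.orb px)"
    and b: "(b, b') \<in> B.lift_rel (B.orb py)" "(d, d') \<in> B.lift_rel (B.orb py)"
    and eq: "q (a, b) = q (a', b')"
  shows "q (c, d) = q (c', d')"
proof -
  let ?O = "A.orb px" and ?Q = "B.orb py"
  have O: "A.inv_rel ?O" and Q: "B.inv_rel ?Q" by (rule A.inv_rel_orb[OF px], rule B.inv_rel_orb[OF py])
  obtain w1 where w1: "(a, a') = A.lift_param ?O w1" "w1 \<in> fst (PhiO (A.rel_obj ?O))"
    using a(1) unfolding A.lift_rel_def by (rule imageE)
  obtain w2 where w2: "(c, c') = A.lift_param ?O w2" "w2 \<in> fst (PhiO (A.rel_obj ?O))"
    using a(2) unfolding A.lift_rel_def by (rule imageE)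
  obtain v1 where v1: "(b, b') = B.lift_param ?Q v1" "v1 \<in> fst (PsiO (B.rel_obj ?Q))"
    using b(1) unfolding B.lift_rel_def by (rule imageE)
  obtain v2 where v2: "(d, d') = B.lift_param ?Q v2" "v2 \<in> fst (PsiO (B.rel_obj ?Q))"
    using b(2) unfolding B.lift_rel_def by (rule imageE)
  let ?T = "diag_prod (PhiO (A.rel_obj ?O)) (PsiO (B.rel_obj ?Q))"
  have T: "transitive_gset K ?T"
    by (rule transitive_prod[OF A.is_gset_rel_obj[OF O] A.transitive_rel_obj_orb[OF px]
          B.is_gset_rel_obj[OF Q] B.transitive_rel_obj_orb[OF py]])
  have "(w1, v1) \<in> fst ?T" "(w2, v2) \<in> fst ?T" using w1(2) w2(2) v1(2) v2(2) by (simp_all add: diag_prod_fst)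
  then obtain k where k: "k \<in> carrier K" "snd ?T k (w1, v1) = (w2, v2)"
    by (rule transitive_gsetE[OF T])
  then have kw: "snd (PhiO (A.rel_obj ?O)) k w1 = w2" and kv: "snd (PsiO (B.rel_obj ?Q)) k v1 = v2"
    by (simp_all add: diag_prod_act)
  have "(c, c') = (snd (PhiO X) k a, snd (PhiO X) k a')"
    using A.lift_param_act[OF O k(1) w1(2)] w1(1)[symmetric] w2(1) kw by simp
  moreover have "(d, d') = (snd (PsiO Y) k b, snd (PsiO Y) k b')"
    using B.lift_param_act[OF Q k(1) v1(2)] v1(1)[symmetric] v2(1) kv by simp
  moreover have "(a, a') \<in> fst (PhiO X) \<times> fst (PhiO X)" "(b, b') \<in> fst (PsiO Y) \<times> fst (PsiO Y)"
    using A.lift_rel_subset[OF O] B.lift_rel_subset[OF Q] a(1) b(1) by blast+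
  ultimately show ?thesis using q_act[OF k(1)] eq by simp
qed

text \<open>The relation on \<open>X \<times> Y\<close> induced by \<open>q\<close>; by the previous lemma it does not matter which
  points of the lifted orbits are tested.\<close>

definition q_rel where
  "q_rel = {(p, p'). p \<in> fst X \<times> fst Y \<and> p' \<in> fst X \<times> fst Y \<and>
     (\<exists>a a' b b'. (a, a') \<in> A.lift_rel (A.orb (fst p, fst p')) \<and>
        (b, b') \<in> B.lift_rel (B.orb (snd p, snd p')) \<and> q (a, b) = q (a', b'))}"

lemma q_rel_iff:
  assumes p: "p \<in> fst X \<times> fst Y" "p' \<in> fst X \<times> fst Y"
    and a: "(a, a') \<in> A.lift_rel (A.orb (fst p, fst p'))" and b: "(b, b') \<in> B.lift_rel (B.orb (snd p, snd p'))"
  shows "(p, p') \<in> q_rel \<longleftrightarrow> q (a, b) = q (a', b')"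
proof
  have px: "(fst p, fst p') \<in> fst X \<times> fst X" and py: "(snd p, snd p') \<in> fst Y \<times> fst Y"
    using p by (simp_all add: mem_Times_iff)
  assume "(p, p') \<in> q_rel"
  then obtain c c' d d' where "(c, c') \<in> A.lift_rel (A.orb (fst p, fst p'))"
      "(d, d') \<in> B.lift_rel (B.orb (snd p, snd p'))" "q (c, d) = q (c', d')"
    unfolding q_rel_def by blast
  then show "q (a, b) = q (a', b')" using q_eq_on_lifted_orbs[OF px py _ a _ b] by blast
next
  assume "q (a, b) = q (a', b')"
  then show "(p, p') \<in> q_rel" unfolding q_rel_def using p a b by blast
qed

lemma equiv_q_rel: "equiv (fst X \<times> fst Y) q_rel"
proof (rule equivI)
  show "q_rel \<subseteq> (fst X \<times> fst Y) \<times> fst X \<times> fst Y" unfolding q_rel_def by blast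
  show "refl_on (fst X \<times> fst Y) q_rel"
  proof (rule refl_onI)
    fix p assume p: "p \<in> fst X \<times> fst Y"
    obtain a b where "a \<in> fst (PhiO X)" "b \<in> fst (PsiO Y)" using Phi_nonempty[OF X] Psi_nonempty[OF Y] by blast
    then have "(a, a) \<in> A.lift_rel (A.orb (fst p, fst p))" "(b, b) \<in> B.lift_rel (B.orb (snd p, snd p))"
      using A.lift_rel_orb_diag B.lift_rel_orb_diag p by (simp_all add: mem_Times_iff)
    then show "(p, p) \<in> q_rel" using q_rel_iff[OF p p] by blast
  qed
  show "sym q_rel"
  proof (rule symI)
    fix p p' assume r: "(p, p') \<in> q_rel"
    then have p: "p \<in> fst X \<times> fst Y" "p' \<in> fst X \<times> fst Y" unfolding q_rel_def by blast+
    obtain a a' b b' where a: "(a, a') \<in> A.lift_rel (A.orb (fst p, fst p'))"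
        and b: "(b, b') \<in> B.lift_rel (B.orb (snd p, snd p'))"
      using r unfolding q_rel_def by blast
    have "(a', a) \<in> A.lift_rel (A.orb (fst p', fst p))" "(b', b) \<in> B.lift_rel (B.orb (snd p', snd p))"
      using A.lift_rel_orb_swap[OF _ a] B.lift_rel_orb_swap[OF _ b] p by (simp_all add: mem_Times_iff)
    then show "(p', p) \<in> q_rel" using q_rel_iff[OF p a b] q_rel_iff[OF p(2,1)] r by simp
  qed
  show "trans q_rel"
  proof (rule transI)
    fix p p' p'' assume r: "(p, p') \<in> q_rel" "(p', p'') \<in> q_rel"
    then have p: "p \<in> fst X \<times> fst Y" "p' \<in> fst X \<times> fst Y" "p'' \<in> fst X \<times> fst Y"
      unfolding q_rel_def by blast+
    obtain a a' a'' where a: "(a, a') \<in> A.lift_rel (A.orb (fst p, fst p'))"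
        "(a', a'') \<in> A.lift_rel (A.orb (fst p', fst p''))" "(a, a'') \<in> A.lift_rel (A.orb (fst p, fst p''))"
      using A.lift_rel_orb_compose[OF Phi_nonempty] p by (metis mem_Times_iff)
    obtain b b' b'' where b: "(b, b') \<in> B.lift_rel (B.orb (snd p, snd p'))"
        "(b', b'') \<in> B.lift_rel (B.orb (snd p', snd p''))" "(b, b'') \<in> B.lift_rel (B.orb (snd p, snd p''))"
      using B.lift_rel_orb_compose[OF Psi_nonempty] p by (metis mem_Times_iff)
    have "q (a, b) = q (a', b')" using r(1) q_rel_iff[OF p(1,2) a(1) b(1)] by simp
    also have "\<dots> = q (a'', b'')" using r(2) q_rel_iff[OF p(2,3) a(2) b(2)] by simp
    finally show "(p, p'') \<in> q_rel" using q_rel_iff[OF p(1,3) a(3) b(3)] by simp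
  qed
qed

lemma invariant_q_rel: "invariant_rel (G \<times>\<times> H) (ext_prod X Y) q_rel"
  unfolding invariant_rel_def
proof (intro ballI allI impI)
  fix k p p' assume k: "k \<in> carrier (G \<times>\<times> H)" and r: "(p, p') \<in> q_rel"
  obtain g h where gh: "k = (g, h)" "g \<in> carrier G" "h \<in> carrier H" using k by (cases k) simp
  obtain x y x' y' where pp: "p = (x, y)" "p' = (x', y')" by (cases p, cases p')
  have m: "x \<in> fst X" "y \<in> fst Y" "x' \<in> fst X" "y' \<in> fst Y"
    using r unfolding q_rel_def pp by simp_all
  have "A.orb (snd X g x, snd X g x') = A.orb (x, x')" "B.orb (snd Y h y, snd Y h y') = B.orb (y, y')"
    using A.orb_act[OF gh(2), of "(x, x')"] B.orb_act[OF gh(3), of "(y, y')"] m by (simp_all add: A.XX_act B.XX_act)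
  moreover have "snd X g x \<in> fst X" "snd X g x' \<in> fst X" "snd Y h y \<in> fst Y" "snd Y h y' \<in> fst Y"
    using smooth_action_closed[OF is_gset_smooth[OF X(1)] gh(2)]
      smooth_action_closed[OF is_gset_smooth[OF Y(1)] gh(3)] m by simp_all
  ultimately show "(snd (ext_prod X Y) k p, snd (ext_prod X Y) k p') \<in> q_rel"
    using r unfolding q_rel_def gh(1) pp by (simp add: ext_prod_act)
qed

lemma q_eq_iff_lift_rel:
  assumes R: "equiv (fst X) R" "invariant_rel G X R" and S: "equiv (fst Y) S" "invariant_rel H Y S"
    and RS: "q_rel = {((x, y), (x', y')). (x, x') \<in> R \<and> (y, y') \<in> S}"
    and a: "(a, a') \<in> fst (PhiO X) \<times> fst (PhiO X)" and b: "(b, b') \<in> fst (PsiO Y) \<times> fst (PsiO Y)"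
  shows "q (a, b) = q (a', b') \<longleftrightarrow> (a, a') \<in> A.lift_rel R \<and> (b, b') \<in> B.lift_rel S"
proof -
  obtain px where px: "px \<in> fst X \<times> fst X" "(a, a') \<in> A.lift_rel (A.orb px)"
    using A.lift_rel_orb_exists[OF a] by blast
  obtain py where py: "py \<in> fst Y \<times> fst Y" "(b, b') \<in> B.lift_rel (B.orb py)"
    using B.lift_rel_orb_exists[OF b] by blast
  have p: "(fst px, fst py) \<in> fst X \<times> fst Y" "(snd px, snd py) \<in> fst X \<times> fst Y"
    using px(1) py(1) by (simp_all add: mem_Times_iff)
  have "q (a, b) = q (a', b') \<longleftrightarrow> ((fst px, fst py), (snd px, snd py)) \<in> q_rel"
    using q_rel_iff[OF p] px(2) py(2) by simp
  also have "\<dots> \<longleftrightarrow> px \<in> R \<and> py \<in> S" unfolding RS by simp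
  also have "\<dots> \<longleftrightarrow> (a, a') \<in> A.lift_rel R \<and> (b, b') \<in> B.lift_rel S"
    using A.lift_rel_orb_mem_iff[OF A.inv_rel_if_invariant[OF R] px]
      B.lift_rel_orb_mem_iff[OF B.inv_rel_if_invariant[OF S] py] by simp
  finally show ?thesis .
qed

lemma quotient_is_product:
  "\<exists>X' Y'. gset_quotient G TG X X' \<and> gset_quotient H TH Y Y' \<and> gset_iso K Z (diag_prod (PhiO X') (PsiO Y'))"
proof -
  obtain R S where R: "equiv (fst X) R" "invariant_rel G X R" and S: "equiv (fst Y) S" "invariant_rel H Y S"
    and RS: "q_rel = {((x, y), (x', y')). (x, x') \<in> R \<and> (y, y') \<in> S}"
    using split_invariant_equiv_product[OF proG proH X Y equiv_q_rel invariant_q_rel split] by blast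
  have coX: "stabilizer_cosets_open G TG X" and coY: "stabilizer_cosets_open H TH Y"
    by (rule topgroup_stabilizer_cosets_open[OF pro_oligomorphic_topgroup[OF proG] is_gset_smooth[OF X(1)]],
        rule topgroup_stabilizer_cosets_open[OF pro_oligomorphic_topgroup[OF proH] is_gset_smooth[OF Y(1)]])
  note QX = std_quotient[OF A.grp is_gset_smooth[OF X(1)] coX X(2) R]
  note QY = std_quotient[OF B.grp is_gset_smooth[OF Y(1)] coY Y(2) S]
  let ?X' = "std_quotient G X R" and ?Y' = "std_quotient H Y S"
  let ?pX = "PhiM X ?X' (std_quotient_map G X R)" and ?pY = "PsiM Y ?Y' (std_quotient_map H Y S)"
  have liftR: "A.lift_rel R = {a \<in> fst (PhiO X) \<times> fst (PhiO X). ?pX (fst a) = ?pX (snd a)}"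
    using A.lift_rel_kernel[OF QX(1) QX(3)]
    unfolding std_quotient_kernel[OF A.grp is_gset_smooth[OF X(1)] coX X(2) R] .
  have liftS: "B.lift_rel S = {b \<in> fst (PsiO Y) \<times> fst (PsiO Y). ?pY (fst b) = ?pY (snd b)}"
    using B.lift_rel_kernel[OF QY(1) QY(3)]
    unfolding std_quotient_kernel[OF B.grp is_gset_smooth[OF Y(1)] coY Y(2) S] .
  let ?theta = "map_prod ?pX ?pY"
  have theta: "gmap K W (diag_prod (PhiO ?X') (PsiO ?Y')) ?theta"
    by (rule gmap_diag_prod_map[OF A.Fm_gmap[OF X(1) QX(1) QX(3)] B.Fm_gmap[OF Y(1) QY(1) QY(3)]])
  have "fst W \<noteq> {}" using Phi_nonempty[OF X] Psi_nonempty[OF Y] by (simp add: diag_prod_fst)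
  then have theta_onto: "?theta ` fst W = fst (diag_prod (PhiO ?X') (PsiO ?Y'))"
    by (rule gmap_onto_transitive[OF theta _ smooth_W transitive_prod[OF QX(1,2) QY(1,2)]])
  have ker: "q w = q w' \<longleftrightarrow> ?theta w = ?theta w'" if "w \<in> fst W" "w' \<in> fst W" for w w'
  proof -
    obtain a b a' b' where ab: "w = (a, b)" "w' = (a', b')" by (cases w, cases w')
    have "(a, a') \<in> fst (PhiO X) \<times> fst (PhiO X)" "(b, b') \<in> fst (PsiO Y) \<times> fst (PsiO Y)"
      using that unfolding ab by (simp_all add: diag_prod_fst)
    then show ?thesis using q_eq_iff_lift_rel[OF R S RS] unfolding ab liftR liftS by simp
  qed
  have "gset_iso K Z (diag_prod (PhiO ?X') (PsiO ?Y'))"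
    by (rule gset_iso_of_kernel_eq[OF q theta theta_onto smooth_W ker])
  moreover have "gset_quotient G TG X ?X'" "gset_quotient H TH Y ?Y'"
    unfolding gset_quotient_def using QX(1,3,4) QY(1,3,4) by blast+
  ultimately show ?thesis by blast
qed

end

theorem proposition5p7:
  fixes G :: "'g monoid" and TG :: "'g topology"
    and H :: "'h monoid" and TH :: "'h topology"
    and K :: "'k monoid" and TK :: "'k topology"
    and PhiO :: "(nat \<times> 'g set, 'g) gset \<Rightarrow> (nat \<times> 'k set, 'k) gset"
    and PhiM :: "(nat \<times> 'g set, 'g) gset \<Rightarrow> (nat \<times> 'g set, 'g) gset
                  \<Rightarrow> (nat \<times> 'g set \<Rightarrow> nat \<times> 'g set) \<Rightarrow> (nat \<times> 'k set \<Rightarrow> nat \<times> 'k set)"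
    and PsiO :: "(nat \<times> 'h set, 'h) gset \<Rightarrow> (nat \<times> 'k set, 'k) gset"
    and PsiM :: "(nat \<times> 'h set, 'h) gset \<Rightarrow> (nat \<times> 'h set, 'h) gset
                  \<Rightarrow> (nat \<times> 'h set \<Rightarrow> nat \<times> 'h set) \<Rightarrow> (nat \<times> 'k set \<Rightarrow> nat \<times> 'k set)"
    and X :: "(nat \<times> 'g set, 'g) gset"
    and Y :: "(nat \<times> 'h set, 'h) gset"
    and Z :: "('z, 'k) gset"
  assumes "pro_oligomorphic G TG" and "pro_oligomorphic H TH" and "pro_oligomorphic K TK"
    and "split_wrt G TG TYPE('h)" and "split_wrt G TG TYPE('k)"
    and "exact_functor G TG K TK PhiO PhiM"
    and "exact_functor H TH K TK PsiO PsiM"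
    and "\<forall>X' Y'. is_gset G TG X' \<and> transitive_gset G X' \<and> is_gset H TH Y' \<and> transitive_gset H Y'
            \<longrightarrow> transitive_gset K (diag_prod (PhiO X') (PsiO Y'))"
    and "is_gset G TG X" and "transitive_gset G X"
    and "is_gset H TH Y" and "transitive_gset H Y"
    and "gset_quotient K TK (diag_prod (PhiO X) (PsiO Y)) Z"
  shows "\<exists>X' Y'. gset_quotient G TG X X' \<and> gset_quotient H TH Y Y' \<and>
           gset_iso K Z (diag_prod (PhiO X') (PsiO Y'))"
proof -
  obtain q where "gmap K (diag_prod (PhiO X) (PsiO Y)) Z q" "q ` fst (diag_prod (PhiO X) (PsiO Y)) = fst Z"
    using assms(13) unfolding gset_quotient_def by blast
  then have "product_quotient_setting G TG H TH K TK PhiO PhiM PsiO PsiM X Y Z q"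
    using assms(1,2,4,6-12) unfolding product_quotient_setting_def by blast
  then show ?thesis by (rule product_quotient_setting.quotient_is_product)
qed

end
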